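(* Let $a<b$ be coprime positive integers and suppose the gap sequence of $U(a,b)$ is eventually periodic with computable witnesses, i.e. there is an algorithm that, given $(a,b)$, outputs a threshold $N$ and period $p\ge 1$ such that $g_{k+p}=g_k$ for all $k\ge N$. Let $\mathcal{U}_{a,b}=(\mathbb{N},+,0,1,\mathrm{Ulam}_{a,b})$ with $\mathrm{Ulam}_{a,b}$ interpreted as $U(a,b)$. Then: (i) the density $d(U(a,b))=\lim_{n\to\infty}|U(a,b)\cap[0,n]|/n$ is computable (as a rational number) from the witnesses; (ii) $\mathrm{Th}(\mathcal{U}_{a,b})$ is decidable; (iii) membership in any definable subset of $\mathbb{N}^k$ in $\mathcal{U}_{a,b}$ is decidable, uniformly in the defining formula.
   Context: For positive integers $a<b$, the Ulam sequence $U(a,b)$ is the increasing sequence $(u_k)_{k\ge 1}$ defined by $u_1=a$, $u_2=b$, and for $k\ge 3$, $u_k$ is the least integer $n>u_{k-1}$ for which there is exactly one pair of indices $1\le i<j<k$ with $n=u_i+u_j$; $U(a,b)$ also denotes the set $\{u_k\}$, and $g_k=u_{k+1}-u_k$. *)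

theory Defs
  imports Complex_Main "HOL-Library.Nat_Bijection"
begin

fun ulam_prefix :: "nat \<Rightarrow> nat \<Rightarrow> nat \<Rightarrow> nat list" where
  "ulam_prefix a b 0 = []"
| "ulam_prefix a b (Suc 0) = [a]"
| "ulam_prefix a b (Suc (Suc 0)) = [a, b]"
| "ulam_prefix a b (Suc (Suc (Suc k))) =
     (let us = ulam_prefix a b (Suc (Suc k)) in
      us @ [LEAST n. n > last us \<and>
              card {(i, j). i < j \<and> j < length us \<and> us ! i + us ! j = n} = 1])"

definition ulam :: "nat \<Rightarrow> nat \<Rightarrow> nat \<Rightarrow> nat" where
  "ulam a b k = ulam_prefix a b (Suc k) ! k"

definition ulam_set :: "nat \<Rightarrow> nat \<Rightarrow> nat set" where
  "ulam_set a b = range (ulam a b)"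

definition ulam_gap :: "nat \<Rightarrow> nat \<Rightarrow> nat \<Rightarrow> nat" where
  "ulam_gap a b k = ulam a b (Suc k) - ulam a b k"

definition periodic_witness :: "nat \<Rightarrow> nat \<Rightarrow> nat \<Rightarrow> nat \<Rightarrow> bool" where
  "periodic_witness a b N p \<longleftrightarrow>
     p \<ge> 1 \<and> (\<forall>k\<ge>N. ulam_gap a b (k + p) = ulam_gap a b k)"

datatype recf = Z | S | Proj nat | Cn recf "recf list" | Pr recf recf | Mn recf

inductive eval :: "recf \<Rightarrow> nat list \<Rightarrow> nat \<Rightarrow> bool" where
  eval_Z: "eval Z xs 0"
| eval_S: "eval S (x # xs) (Suc x)"
| eval_Proj: "i < length xs \<Longrightarrow> eval (Proj i) xs (xs ! i)"
| eval_Cn: "list_all2 (\<lambda>g y. eval g xs y) gs ys \<Longrightarrow> eval f ys z \<Longrightarrow> eval (Cn f gs) xs z"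
| eval_Pr0: "eval f xs y \<Longrightarrow> eval (Pr f g) (0 # xs) y"
| eval_PrS: "eval (Pr f g) (n # xs) y \<Longrightarrow> eval g (n # y # xs) z \<Longrightarrow> eval (Pr f g) (Suc n # xs) z"
| eval_Mn: "eval f (n # xs) 0 \<Longrightarrow> (\<forall>m<n. \<exists>y. eval f (m # xs) y \<and> y \<noteq> 0)
             \<Longrightarrow> eval (Mn f) xs n"
monos list_all2_mono

datatype tm = Var nat | Zer | One | Plus tm tm
datatype fm = Eq tm tm | Ulam tm | Neg fm | And fm fm | Ex nat fm

primrec tm_val :: "(nat \<Rightarrow> nat) \<Rightarrow> tm \<Rightarrow> nat" where
  "tm_val e (Var i) = e i"
| "tm_val e Zer = 0"
| "tm_val e One = 1"
| "tm_val e (Plus s t) = tm_val e s + tm_val e t"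

primrec sat :: "nat set \<Rightarrow> (nat \<Rightarrow> nat) \<Rightarrow> fm \<Rightarrow> bool" where
  "sat U e (Eq s t) = (tm_val e s = tm_val e t)"
| "sat U e (Ulam t) = (tm_val e t \<in> U)"
| "sat U e (Neg \<phi>) = (\<not> sat U e \<phi>)"
| "sat U e (And \<phi> \<psi>) = (sat U e \<phi> \<and> sat U e \<psi>)"
| "sat U e (Ex i \<phi>) = (\<exists>x. sat U (e(i := x)) \<phi>)"

primrec tm_vars :: "tm \<Rightarrow> nat set" where
  "tm_vars (Var i) = {i}"
| "tm_vars Zer = {}"
| "tm_vars One = {}"
| "tm_vars (Plus s t) = tm_vars s \<union> tm_vars t"

primrec fvars :: "fm \<Rightarrow> nat set" where
  "fvars (Eq s t) = tm_vars s \<union> tm_vars t"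
| "fvars (Ulam t) = tm_vars t"
| "fvars (Neg \<phi>) = fvars \<phi>"
| "fvars (And \<phi> \<psi>) = fvars \<phi> \<union> fvars \<psi>"
| "fvars (Ex i \<phi>) = fvars \<phi> - {i}"

primrec tm_code :: "tm \<Rightarrow> nat" where
  "tm_code (Var i) = prod_encode (0, i)"
| "tm_code Zer = prod_encode (1, 0)"
| "tm_code One = prod_encode (2, 0)"
| "tm_code (Plus s t) = prod_encode (3, prod_encode (tm_code s, tm_code t))"

primrec fm_code :: "fm \<Rightarrow> nat" where
  "fm_code (Eq s t) = prod_encode (0, prod_encode (tm_code s, tm_code t))"
| "fm_code (Ulam t) = prod_encode (1, tm_code t)"
| "fm_code (Neg \<phi>) = prod_encode (2, fm_code \<phi>)"
| "fm_code (And \<phi> \<psi>) = prod_encode (3, prod_encode (fm_code \<phi>, fm_code \<psi>))"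
| "fm_code (Ex i \<phi>) = prod_encode (4, prod_encode (i, fm_code \<phi>))"

definition tuple_env :: "nat list \<Rightarrow> nat \<Rightarrow> nat" where
  "tuple_env xs i = (if i < length xs then xs ! i else 0)"

end

theory Submission
  imports Defs
begin

text \<open>If the gaps of U(a,b) are periodic from index N on with period p, then u_(k+p) = u_k + G for
  k \<ge> N, where G = u_(N+p) - u_N. Hence U(a,b) consists of the terms u_k with k < N together with
  the residue classes of u_N, ..., u_(N+p-1) modulo G above these terms. Counting shows that
  U(a,b) has density p / G. The set is also Presburger definable, so every formula of
  (N, +, 0, 1, Ulam) translates into a Presburger formula, which Cooper's quantifier elimination
  decides. The first N + p terms, and with them G and the translation, are computed by primitive
  recursion from a and b. Composing with the witnesses N and p, every ingredient becomes a partial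
  recursive function.\<close>

section \<open>Recursive functions of one, two and three arguments\<close>

definition recursive1 :: "(nat \<Rightarrow> nat) \<Rightarrow> bool" where
  "recursive1 g \<longleftrightarrow> (\<exists>r. \<forall>n. eval r [n] (g n))"

definition recursive2 :: "(nat \<Rightarrow> nat \<Rightarrow> nat) \<Rightarrow> bool" where
  "recursive2 h \<longleftrightarrow> (\<exists>r. \<forall>m n. eval r [m, n] (h m n))"

definition recursive3 :: "(nat \<Rightarrow> nat \<Rightarrow> nat \<Rightarrow> nat) \<Rightarrow> bool" where
  "recursive3 h \<longleftrightarrow> (\<exists>r. \<forall>m n k. eval r [m, n, k] (h m n k))"

lemma eval_Proj_nth: "i < length xs \<Longrightarrow> y = xs ! i \<Longrightarrow> eval (Proj i) xs y"
  using eval_Proj by simp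

lemma eval_Cn1: "eval g xs y \<Longrightarrow> eval f [y] z \<Longrightarrow> eval (Cn f [g]) xs z"
  by (rule eval_Cn[of _ _ "[y]"]) auto

lemma eval_Cn2: "eval g1 xs y1 \<Longrightarrow> eval g2 xs y2 \<Longrightarrow> eval f [y1, y2] z
  \<Longrightarrow> eval (Cn f [g1, g2]) xs z"
  by (rule eval_Cn[of _ _ "[y1, y2]"]) auto

lemma eval_Cn3: "eval g1 xs y1 \<Longrightarrow> eval g2 xs y2 \<Longrightarrow> eval g3 xs y3 \<Longrightarrow> eval f [y1, y2, y3] z
  \<Longrightarrow> eval (Cn f [g1, g2, g3]) xs z"
  by (rule eval_Cn[of _ _ "[y1, y2, y3]"]) auto

lemma recursive1_cong: "recursive1 f \<Longrightarrow> (\<And>n. f n = g n) \<Longrightarrow> recursive1 g"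
  unfolding recursive1_def by metis

lemma recursive2_cong: "recursive2 f \<Longrightarrow> (\<And>m n. f m n = g m n) \<Longrightarrow> recursive2 g"
  unfolding recursive2_def by metis

lemma recursive1_id: "recursive1 (\<lambda>n. n)"
  unfolding recursive1_def by (rule exI[of _ "Proj 0"]) (auto intro: eval_Proj_nth)

lemma recursive1_const: "recursive1 (\<lambda>_. c)"
proof (induction c)
  case 0 then show ?case unfolding recursive1_def by (auto intro: eval_Z)
next
  case (Suc c)
  then obtain r where r: "\<And>n. eval r [n] c" unfolding recursive1_def by auto
  show ?case unfolding recursive1_def
    by (rule exI[of _ "Cn S [r]"]) (auto intro: eval_Cn1 r eval_S)
qed

lemma recursive1_comp: "recursive1 h \<Longrightarrow> recursive1 f \<Longrightarrow> recursive1 (\<lambda>n. h (f n))"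
proof -
  assume "recursive1 h" "recursive1 f"
  then obtain rh rf where "\<And>n. eval rh [n] (h n)" "\<And>n. eval rf [n] (f n)" unfolding recursive1_def by metis
  then show ?thesis unfolding recursive1_def by (intro exI[of _ "Cn rh [rf]"]) (blast intro: eval_Cn1)
qed

lemma recursive1_comp2: "recursive2 h \<Longrightarrow> recursive1 f \<Longrightarrow> recursive1 g
  \<Longrightarrow> recursive1 (\<lambda>n. h (f n) (g n))"
proof -
  assume "recursive2 h" "recursive1 f" "recursive1 g"
  then obtain rh rf rg where "\<And>m n. eval rh [m, n] (h m n)" "\<And>n. eval rf [n] (f n)" "\<And>n. eval rg [n] (g n)"
    unfolding recursive1_def recursive2_def by metis
  then show ?thesis unfolding recursive1_def by (intro exI[of _ "Cn rh [rf, rg]"]) (blast intro: eval_Cn2)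
qed

lemma recursive1_comp3: "recursive3 h \<Longrightarrow> recursive1 f \<Longrightarrow> recursive1 g
  \<Longrightarrow> recursive1 k \<Longrightarrow> recursive1 (\<lambda>n. h (f n) (g n) (k n))"
proof -
  assume "recursive3 h" "recursive1 f" "recursive1 g" "recursive1 k"
  then obtain rh rf rg rk where "\<And>m n k. eval rh [m, n, k] (h m n k)" "\<And>n. eval rf [n] (f n)"
    "\<And>n. eval rg [n] (g n)" "\<And>n. eval rk [n] (k n)"
    unfolding recursive1_def recursive3_def by metis
  then show ?thesis unfolding recursive1_def by (intro exI[of _ "Cn rh [rf, rg, rk]"]) (blast intro: eval_Cn3)
qed

lemma recursive2_comp2: "recursive2 h \<Longrightarrow> recursive2 f \<Longrightarrow> recursive2 g
  \<Longrightarrow> recursive2 (\<lambda>m n. h (f m n) (g m n))"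
proof -
  assume "recursive2 h" "recursive2 f" "recursive2 g"
  then obtain rh rf rg where "\<And>m n. eval rh [m, n] (h m n)" "\<And>m n. eval rf [m, n] (f m n)"
    "\<And>m n. eval rg [m, n] (g m n)"
    unfolding recursive2_def by metis
  then show ?thesis unfolding recursive2_def by (intro exI[of _ "Cn rh [rf, rg]"]) (blast intro: eval_Cn2)
qed

lemma recursive2_comp1: "recursive1 h \<Longrightarrow> recursive2 f \<Longrightarrow> recursive2 (\<lambda>m n. h (f m n))"
proof -
  assume "recursive1 h" "recursive2 f"
  then obtain rh rf where "\<And>n. eval rh [n] (h n)" "\<And>m n. eval rf [m, n] (f m n)"
    unfolding recursive1_def recursive2_def by metis
  then show ?thesis unfolding recursive2_def by (intro exI[of _ "Cn rh [rf]"]) (blast intro: eval_Cn1)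
qed

lemma recursive2_arg1: "recursive2 (\<lambda>m n. m)"
  unfolding recursive2_def by (rule exI[of _ "Proj 0"]) (auto intro: eval_Proj_nth)

lemma recursive2_arg2: "recursive2 (\<lambda>m n. n)"
  unfolding recursive2_def by (rule exI[of _ "Proj 1"]) (auto intro: eval_Proj_nth)

lemma recursive2_const: "recursive2 (\<lambda>m n. c)"
proof -
  obtain r where "\<And>n. eval r [n] c" using recursive1_const[of c] unfolding recursive1_def by auto
  then show ?thesis unfolding recursive2_def
    by (intro exI[of _ "Cn r [Proj 0]"]) (auto intro!: eval_Cn1 eval_Proj_nth)
qed

lemma recursive2_rec_nat:
  assumes "recursive1 f0" "recursive3 g"
  shows "recursive2 (\<lambda>m n. rec_nat (f0 n) (\<lambda>k y. g k y n) m)"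
proof -
  obtain rf where rf: "\<And>n. eval rf [n] (f0 n)" using assms(1) unfolding recursive1_def by auto
  obtain rg where rg: "\<And>m n k. eval rg [m, n, k] (g m n k)" using assms(2) unfolding recursive3_def by auto
  have "eval (Pr rf rg) [m, n] (rec_nat (f0 n) (\<lambda>k y. g k y n) m)" for m n
  proof (induction m)
    case 0 then show ?case using eval_Pr0[OF rf] by simp
  next
    case (Suc m) then show ?case using eval_PrS[OF Suc rg] by simp
  qed
  then show ?thesis unfolding recursive2_def by blast
qed

lemma recursive3_Suc_acc: "recursive3 (\<lambda>k y n. Suc y)"
  unfolding recursive3_def by (rule exI[of _ "Cn S [Proj 1]"]) (auto intro!: eval_Cn1 eval_Proj_nth eval_S)

lemma recursive2_add: "recursive2 (\<lambda>m n. m + n)"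
proof -
  have a: "recursive2 (\<lambda>m n. rec_nat n (\<lambda>k y. Suc y) m)"
    using recursive2_rec_nat[OF recursive1_id recursive3_Suc_acc] by simp
  have b: "rec_nat n (\<lambda>k y. Suc y) m = m + n" for m n by (induction m) auto
  show ?thesis by (rule recursive2_cong[OF a b])
qed

lemma recursive1_pred: "recursive1 (\<lambda>n. n - 1)"
proof -
  have "eval (Pr Z (Proj 0)) [n] (n - 1)" for n
  proof (cases n)
    case 0 then show ?thesis using eval_Pr0[OF eval_Z[of "[]"]] by simp
  next
    case (Suc k)
    have "\<exists>y. eval (Pr Z (Proj 0)) [k] y"
    proof (induction k)
      case 0 then show ?case using eval_Pr0[OF eval_Z[of "[]"]] by auto
    next
      case (Suc k) then obtain y where "eval (Pr Z (Proj 0)) [k] y" by auto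
      then show ?case using eval_PrS[of Z "Proj 0" k "[]" y k] eval_Proj_nth[of 0 "[k, y]" k] by auto
    qed
    then obtain y where "eval (Pr Z (Proj 0)) [k] y" by auto
    then show ?thesis using eval_PrS[of Z "Proj 0" k "[]" y k] eval_Proj_nth[of 0 "[k, y]" k] Suc by auto
  qed
  then show ?thesis unfolding recursive1_def by blast
qed

lemma recursive3_acc_fun: "recursive1 f \<Longrightarrow> recursive3 (\<lambda>k y n. f y)"
proof -
  assume "recursive1 f" then obtain r where r: "\<And>n. eval r [n] (f n)" unfolding recursive1_def by auto
  show ?thesis unfolding recursive3_def
    by (rule exI[of _ "Cn r [Proj 1]"]) (auto intro!: eval_Cn1 eval_Proj_nth r)
qed

lemma recursive2_diff: "recursive2 (\<lambda>m n. m - n)"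
proof -
  have a: "recursive2 (\<lambda>m n. rec_nat n (\<lambda>k y. y - 1) m)"
    using recursive2_rec_nat[OF recursive1_id recursive3_acc_fun[OF recursive1_pred]] by simp
  have b: "rec_nat n (\<lambda>k y. y - 1) m = n - m" for m n by (induction m) auto
  have c: "recursive2 (\<lambda>m n. n - m)" by (rule recursive2_cong[OF a b])
  show ?thesis by (rule recursive2_cong[OF recursive2_comp2[OF c recursive2_arg2 recursive2_arg1]]) simp
qed

lemma recursive3_acc_add: "recursive3 (\<lambda>k y n. y + n)"
proof -
  obtain r where r: "\<And>m n. eval r [m, n] (m + n)" using recursive2_add unfolding recursive2_def by auto
  then have r': "\<And>m n z. z = m + n \<Longrightarrow> eval r [m, n] z" by simp
  show ?thesis unfolding recursive3_def
    by (rule exI[of _ "Cn r [Proj 1, Proj 2]"]) (auto intro!: eval_Cn2 eval_Proj_nth r')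
qed

lemma recursive2_mult: "recursive2 (\<lambda>m n. m * n)"
proof -
  have a: "recursive2 (\<lambda>m n. rec_nat 0 (\<lambda>k y. y + n) m)"
    using recursive2_rec_nat[OF recursive1_const recursive3_acc_add] by simp
  have b: "rec_nat 0 (\<lambda>k y. y + n) m = m * n" for m n by (induction m) auto
  show ?thesis by (rule recursive2_cong[OF a b])
qed

lemma recursive3_triangle_step: "recursive3 (\<lambda>k y n. y + Suc k)"
proof -
  obtain r where r: "\<And>m n. eval r [m, n] (m + n)" using recursive2_add unfolding recursive2_def by auto
  then have r': "\<And>m n z. z = m + n \<Longrightarrow> eval r [m, n] z" by simp
  show ?thesis unfolding recursive3_def
    by (rule exI[of _ "Cn r [Proj 1, Cn S [Proj 0]]"]) (auto intro!: eval_Cn2 eval_Cn1 eval_Proj_nth r' eval_S)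
qed

lemma recursive1_triangle: "recursive1 triangle"
proof -
  have a: "recursive2 (\<lambda>m n. rec_nat 0 (\<lambda>k y. y + Suc k) m)"
    using recursive2_rec_nat[OF recursive1_const recursive3_triangle_step] by simp
  have b: "rec_nat 0 (\<lambda>k y. y + Suc k) m = triangle m" for m n by (induction m) auto
  have c: "recursive2 (\<lambda>m n. triangle m)" by (rule recursive2_cong[OF a b])
  show ?thesis by (rule recursive1_cong[OF recursive1_comp2[OF c recursive1_id recursive1_id]]) simp
qed

lemma recursive2_prod_encode: "recursive2 (\<lambda>m n. prod_encode (m, n))"
proof -
  have "recursive2 (\<lambda>m n. triangle (m + n) + m)"
    by (rule recursive2_comp2[OF recursive2_add recursive2_comp1[OF recursive1_triangle recursive2_add] recursive2_arg1])
  then show ?thesis by (rule recursive2_cong) (simp add: prod_encode_def)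
qed

lemma recursive1_Least:
  assumes "recursive2 f" "\<And>n. \<exists>m. f m n = 0"
  shows "recursive1 (\<lambda>n. LEAST m. f m n = 0)"
proof -
  obtain r where r: "\<And>m n. eval r [m, n] (f m n)" using assms(1) unfolding recursive2_def by auto
  have "eval (Mn r) [n] (LEAST m. f m n = 0)" for n
  proof (rule eval_Mn)
    show "eval r [LEAST m. f m n = 0, n] 0" using r[of "LEAST m. f m n = 0" n] LeastI_ex[OF assms(2)[of n]] by simp
    show "\<forall>m<(LEAST m. f m n = 0). \<exists>y. eval r [m, n] y \<and> y \<noteq> 0"
      using r not_less_Least by blast
  qed
  then show ?thesis unfolding recursive1_def by blast
qed

definition prod_decode_diag :: "nat \<Rightarrow> nat" where "prod_decode_diag n = (LEAST s. Suc n - triangle (Suc s) = 0)"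

lemma triangle_ge: "n \<le> triangle n"
  by (induction n) auto

lemma prod_decode_diag_bounds: "triangle (prod_decode_diag n) \<le> n \<and> n < triangle (Suc (prod_decode_diag n))"
proof -
  have ex: "\<exists>s. Suc n - triangle (Suc s) = 0" using triangle_ge[of "Suc n"] by (intro exI[of _ n]) auto
  have 1: "n < triangle (Suc (prod_decode_diag n))" using LeastI_ex[OF ex] unfolding prod_decode_diag_def by simp
  have 2: "triangle (prod_decode_diag n) \<le> n"
  proof (cases "prod_decode_diag n")
    case 0 then show ?thesis by simp
  next
    case (Suc s)
    then have "s < prod_decode_diag n" by simp
    then have "\<not> (Suc n - triangle (Suc s) = 0)" unfolding prod_decode_diag_def by (rule not_less_Least)
    then show ?thesis using Suc by simp
  qed
  from 1 2 show ?thesis by simp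
qed

lemma prod_decode_eq_diag: "prod_decode n = (n - triangle (prod_decode_diag n),
  prod_decode_diag n - (n - triangle (prod_decode_diag n)))"
proof -
  define s where "s = prod_decode_diag n"
  define m where "m = n - triangle s"
  have p: "triangle s \<le> n" "n < triangle s + Suc s" using prod_decode_diag_bounds[of n] unfolding s_def by auto
  then have "m \<le> s" unfolding m_def by simp
  have "n = triangle s + m" using p unfolding m_def by simp
  then have "prod_decode n = prod_decode_aux s m" by (simp add: prod_decode_triangle_add)
  also have "\<dots> = (m, s - m)" using \<open>m \<le> s\<close> by (simp add: prod_decode_aux.simps)
  finally show ?thesis unfolding m_def s_def .
qed

lemma recursive1_Suc: "recursive1 Suc"
  unfolding recursive1_def by (rule exI[of _ S]) (auto intro: eval_S)

lemma recursive1_prod_decode_diag: "recursive1 prod_decode_diag"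
proof -
  have a: "recursive2 (\<lambda>s n. Suc n - triangle (Suc s))"
    by (rule recursive2_comp2[OF recursive2_diff recursive2_comp1[OF recursive1_Suc recursive2_arg2] recursive2_comp1[OF
      recursive1_comp[OF recursive1_triangle recursive1_Suc] recursive2_arg1]])
  have ex: "\<And>n. \<exists>s. Suc n - triangle (Suc s) = 0" using triangle_ge
    by (metis diff_is_0_eq)
  show ?thesis by (rule recursive1_cong[OF recursive1_Least[OF a ex]]) (simp add: prod_decode_diag_def)
qed

lemma recursive1_fst_prod_decode: "recursive1 (\<lambda>n. fst (prod_decode n))"
proof -
  have "recursive1 (\<lambda>n. n - triangle (prod_decode_diag n))"
    by (rule recursive1_comp2[OF recursive2_diff recursive1_id recursive1_comp[OF recursive1_triangle
      recursive1_prod_decode_diag]])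
  then show ?thesis by (rule recursive1_cong) (simp add: prod_decode_eq_diag)
qed

lemma recursive1_snd_prod_decode: "recursive1 (\<lambda>n. snd (prod_decode n))"
proof -
  have "recursive1 (\<lambda>n. prod_decode_diag n - (n - triangle (prod_decode_diag n)))"
    by (rule recursive1_comp2[OF recursive2_diff recursive1_prod_decode_diag recursive1_comp2[OF recursive2_diff
      recursive1_id recursive1_comp[OF recursive1_triangle recursive1_prod_decode_diag]]])
  then show ?thesis by (rule recursive1_cong) (simp add: prod_decode_eq_diag)
qed

lemma recursive1_if_zero: "recursive1 b \<Longrightarrow> recursive1 f \<Longrightarrow> recursive1 g
  \<Longrightarrow> recursive1 (\<lambda>n. if b n = 0 then g n else f n)"
proof -
  assume "recursive1 b" "recursive1 f" "recursive1 g"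
  then obtain rb rf rg where r: "\<And>n. eval rb [n] (b n)" "\<And>n. eval rf [n] (f n)" "\<And>n. eval rg [n] (g n)"
    unfolding recursive1_def by metis
  have p: "eval (Pr (Proj 1) (Proj 2)) [k, x, y] (if k = 0 then y else x)" for k x y
  proof (induction k)
    case 0 then show ?case using eval_Pr0[OF eval_Proj_nth[of 1 "[x, y]" y]] by simp
  next
    case (Suc k)
    then show ?case using eval_PrS[OF Suc eval_Proj_nth[of 2 "[k, _, x, y]" x]] by simp
  qed
  show ?thesis unfolding recursive1_def
    by (rule exI[of _ "Cn (Pr (Proj 1) (Proj 2)) [rb, rf, rg]"], intro allI eval_Cn3[OF r(1) r(2) r(3)] p)
qed

lemma recursive3_funpow:
  assumes "recursive2 st"
  shows "recursive3 (\<lambda>n s e. (st e ^^ n) s)"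
proof -
  obtain r where r: "\<And>m n. eval r [m, n] (st m n)" using assms unfolding recursive2_def by auto
  have "eval (Pr (Proj 0) (Cn r [Proj 3, Proj 1])) [n, s, e] ((st e ^^ n) s)" for n s e
  proof (induction n)
    case 0 then show ?case using eval_Pr0[OF eval_Proj_nth[of 0 "[s, e]" s]] by simp
  next
    case (Suc n)
    show ?case
      by (rule eval_PrS[OF Suc]) (auto intro!: eval_Cn2 eval_Proj_nth r[of e, simplified])
  qed
  then show ?thesis unfolding recursive3_def by blast
qed

section \<open>Computable functions between encoded types\<close>

class encode = fixes enc :: "'a \<Rightarrow> nat"

instantiation nat :: encode begin

definition enc_nat_def: "enc n = (n::nat)"
instance ..
end

instantiation bool :: encode begin

definition enc_bool_def: "enc b = (if b then 1 else (0::nat))"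
instance ..
end

instantiation int :: encode begin

definition enc_int_def: "enc (i::int) = prod_encode (nat i, nat (- i))"
instance ..
end

instantiation prod :: (encode, encode) encode begin

definition enc_prod_def: "enc p = prod_encode (enc (fst p), enc (snd p))"
instance ..
end

instantiation list :: (encode) encode begin

definition enc_list_def: "enc xs = list_encode (map enc xs)"
instance ..
end

lemma enc_pair[simp]: "enc (a, b) = prod_encode (enc a, enc b)" by (simp add: enc_prod_def)

lemma enc_nat[simp]: "enc (n::nat) = n" by (simp add: enc_nat_def)

lemma enc_Nil[simp]: "enc [] = 0" by (simp add: enc_list_def)

lemma enc_Cons[simp]: "enc (a # l) = Suc (prod_encode (enc a, enc l))" by (simp add: enc_list_def)

lemma enc_True[simp]: "enc True = 1" and enc_False[simp]: "enc False = 0" by (simp_all add: enc_bool_def)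

definition computable :: "('a::encode \<Rightarrow> 'b::encode) \<Rightarrow> bool" where
  "computable f \<longleftrightarrow> (\<exists>g. recursive1 g \<and> (\<forall>x. g (enc x) = enc (f x)))"

named_theorems computable_intros

lemma computableI: "recursive1 g \<Longrightarrow> (\<And>x. g (enc x) = enc (f x)) \<Longrightarrow> computable f"
  unfolding computable_def by blast

lemma computableE: "computable f \<Longrightarrow> (\<And>g. recursive1 g \<Longrightarrow> (\<And>x. g (enc x) = enc (f x)) \<Longrightarrow> P)
  \<Longrightarrow> P"
  unfolding computable_def by blast

lemma computable_cong: "computable f \<Longrightarrow> (\<And>x. f x = g x) \<Longrightarrow> computable g"
  unfolding computable_def by metis

lemma computable_id[computable_intros]: "computable (\<lambda>x. x)" by (rule computableI[OF recursive1_id]) simp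

lemma computable_const[computable_intros]: "computable (\<lambda>x. c)" by (rule computableI[OF recursive1_const]) simp

lemma computable_comp: "computable f \<Longrightarrow> computable g \<Longrightarrow> computable (\<lambda>x. f (g x))"
  apply (erule computableE, erule computableE)
  subgoal for gf gg by (rule computableI[OF recursive1_comp[of gf gg]]) auto
  done

lemma computable_pair[computable_intros]: "computable f \<Longrightarrow> computable g
  \<Longrightarrow> computable (\<lambda>x. (f x, g x))"
  apply (erule computableE, erule computableE)
  subgoal for gf gg by (rule computableI[OF recursive1_comp2[OF recursive2_prod_encode, of gf gg]]) auto
  done

lemma computable_fst[computable_intros]: "computable f \<Longrightarrow> computable (\<lambda>x. fst (f x))"
  apply (erule computableE)
  subgoal for gf by (rule computableI[OF recursive1_comp[OF recursive1_fst_prod_decode, of gf]])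
    (auto simp: enc_prod_def[of "f _"])
  done

lemma computable_snd[computable_intros]: "computable f \<Longrightarrow> computable (\<lambda>x. snd (f x))"
  apply (erule computableE)
  subgoal for gf by (rule computableI[OF recursive1_comp[OF recursive1_snd_prod_decode, of gf]])
    (auto simp: enc_prod_def[of "f _"])
  done

lemma computable_nat_fun2: "recursive2 h \<Longrightarrow> computable (f :: 'a::encode \<Rightarrow> nat)
  \<Longrightarrow> computable g \<Longrightarrow> computable (\<lambda>x. h (f x) (g x))"
  apply (erule computableE, erule computableE)
  subgoal for gf gg by (rule computableI[OF recursive1_comp2[of h gf gg]]) auto
  done

lemma computable_nat_fun1: "recursive1 h \<Longrightarrow> computable (f :: 'a::encode \<Rightarrow> nat)
  \<Longrightarrow> computable (\<lambda>x. h (f x))"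
  apply (erule computableE)
  subgoal for gf by (rule computableI[OF recursive1_comp[of h gf]]) auto
  done

lemma computable_enc[computable_intros]: "computable f \<Longrightarrow> computable (\<lambda>x. enc (f x))"
  by (erule computableE, rule computableI) auto

lemma computable_add[computable_intros]: "computable f \<Longrightarrow> computable g
  \<Longrightarrow> computable (\<lambda>x. f x + g x :: nat)"
  by (rule computable_nat_fun2[OF recursive2_add])

lemma computable_sub[computable_intros]: "computable f \<Longrightarrow> computable g
  \<Longrightarrow> computable (\<lambda>x. f x - g x :: nat)"
  by (rule computable_nat_fun2[OF recursive2_diff])

lemma computable_mult[computable_intros]: "computable f \<Longrightarrow> computable g
  \<Longrightarrow> computable (\<lambda>x. f x * g x :: nat)"
  by (rule computable_nat_fun2[OF recursive2_mult])

lemma computable_Suc[computable_intros]: "computable f \<Longrightarrow> computable (\<lambda>x. Suc (f x))"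
  by (rule computable_nat_fun1[OF recursive1_Suc])

lemma computable_if[computable_intros]: "computable b \<Longrightarrow> computable f \<Longrightarrow> computable g
  \<Longrightarrow> computable (\<lambda>x. if b x then f x else g x)"
  apply (erule computableE, erule computableE, erule computableE)
  subgoal for gb gf gg
    by (rule computableI[OF recursive1_if_zero[of gb gf gg]]) auto
  done

lemma recursive2_eq_indicator: "recursive2 (\<lambda>a b. if a = b then 1 else 0)"
proof -
  have "recursive2 (\<lambda>a b. 1 - ((a - b) + (b - a)))"
    by (rule recursive2_comp2[OF recursive2_diff recursive2_const recursive2_comp2[OF recursive2_add recursive2_diff
      recursive2_comp2[OF recursive2_diff recursive2_arg2 recursive2_arg1]]])
  then show ?thesis by (rule recursive2_cong) auto
qed

lemma recursive2_less_indicator: "recursive2 (\<lambda>a b. if a < b then 1 else 0)"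
proof -
  have "recursive2 (\<lambda>a b. 1 - (1 - (b - a)))"
    by (rule recursive2_comp2[OF recursive2_diff recursive2_const recursive2_comp2[OF recursive2_diff recursive2_const
      recursive2_comp2[OF recursive2_diff recursive2_arg2 recursive2_arg1]]])
  then show ?thesis by (rule recursive2_cong) auto
qed

lemma computable_nat_eq[computable_intros]: "computable f \<Longrightarrow> computable g
  \<Longrightarrow> computable (\<lambda>x. (f x :: nat) = g x)"
  apply (erule computableE, erule computableE)
  subgoal for gf gg by (rule computableI[OF recursive1_comp2[OF recursive2_eq_indicator, of gf gg]])
    (auto simp: enc_bool_def)
  done

lemma computable_nat_less[computable_intros]: "computable f \<Longrightarrow> computable g
  \<Longrightarrow> computable (\<lambda>x. (f x :: nat) < g x)"
  apply (erule computableE, erule computableE)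
  subgoal for gf gg by (rule computableI[OF recursive1_comp2[OF recursive2_less_indicator, of gf gg]])
    (auto simp: enc_bool_def)
  done

lemma computable_not[computable_intros]: "computable b \<Longrightarrow> computable (\<lambda>x. \<not> b x)"
  by (rule computable_cong[OF computable_if[of b "\<lambda>x. False" "\<lambda>x. True", OF _ computable_const computable_const]])
    auto

lemma computable_conj[computable_intros]: "computable b \<Longrightarrow> computable c
  \<Longrightarrow> computable (\<lambda>x. b x \<and> c x)"
  by (rule computable_cong[OF computable_if[of b c "\<lambda>x. False", OF _ _ computable_const]]) auto

lemma computable_disj[computable_intros]: "computable b \<Longrightarrow> computable c
  \<Longrightarrow> computable (\<lambda>x. b x \<or> c x)"
  by (rule computable_cong[OF computable_if[of b "\<lambda>x. True" c, OF _ computable_const]]) auto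

lemma computable_imp[computable_intros]: "computable b \<Longrightarrow> computable c
  \<Longrightarrow> computable (\<lambda>x. b x \<longrightarrow> c x)"
  by (rule computable_cong[OF computable_if[of b c "\<lambda>x. True", OF _ _ computable_const]]) auto

lemma computable_bool_eq[computable_intros]: "computable b \<Longrightarrow> computable c
  \<Longrightarrow> computable (\<lambda>x. (b x :: bool) = c x)"
  by (rule computable_cong[OF computable_if[of b c "\<lambda>x. \<not> c x", OF _ _ computable_not]]) auto

lemma computable_nat_le[computable_intros]: "computable f \<Longrightarrow> computable g
  \<Longrightarrow> computable (\<lambda>x. (f x :: nat) \<le> g x)"
  by (rule computable_cong[OF computable_not[OF computable_nat_less[of g f]]]) auto

lemma computable_let[computable_intros]: "computable f \<Longrightarrow> computable (\<lambda>p. g (fst p) (snd p))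
  \<Longrightarrow> computable (\<lambda>x. let y = f x in g x y)"
  by (rule computable_cong[OF computable_comp[OF _ computable_pair[OF computable_id]]]) (auto simp: Let_def)

lemma computable_case_prod[computable_intros]:
  "computable f \<Longrightarrow> computable (\<lambda>p. g (fst p) (fst (snd p)) (snd (snd p))) \<Longrightarrow>
    computable (\<lambda>x. case f x of (a, b) \<Rightarrow> g x a b)"
  by (rule computable_cong[OF computable_comp[OF _ computable_pair[OF computable_id]]]) (auto split: prod.split)

lemma computable_funpow[computable_intros]:
  fixes st :: "'a::encode \<Rightarrow> 's::encode \<Rightarrow> 's"
  assumes st: "computable (\<lambda>p. st (fst p) (snd p))" and n: "computable n" and s: "computable s"
  shows "computable (\<lambda>x. (st x ^^ n x) (s x))"
proof -
  obtain G where G: "recursive1 G" "\<And>x y. G (prod_encode (enc x, enc y)) = enc (st x y)"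
    using st by (rule computableE) (metis enc_pair fst_conv snd_conv)
  obtain gn where gn: "recursive1 gn" "\<And>x. gn (enc x) = enc (n x)" using n unfolding computable_def by blast
  obtain gs where gs: "recursive1 gs" "\<And>x. gs (enc x) = enc (s x)" using s unfolding computable_def by blast
  define st' where "st' c y = G (prod_encode (c, y))" for c y
  have r2: "recursive2 st'" unfolding st'_def by (rule recursive2_comp1[OF G(1) recursive2_prod_encode])
  have it: "((st' (enc x)) ^^ k) (enc y) = enc ((st x ^^ k) y)" for x y k
  proof (induction k)
    case 0 show ?case by (simp only: funpow_0)
  next
    case (Suc k) then show ?case by (simp add: st'_def G(2))
  qed
  show ?thesis
    by (rule computableI[OF recursive1_comp3[OF recursive3_funpow[OF r2] gn(1) gs(1) recursive1_id]]) (simp add: gn gs it)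
qed

text \<open>The bound B x makes the minimisation terminate, as the unbounded operator Mn requires.\<close>

lemma computable_least[computable_intros]:
  fixes t :: "'a::encode \<Rightarrow> nat \<Rightarrow> bool"
  assumes t: "computable (\<lambda>p. t (fst p) (snd p))" and B: "computable B"
  shows "computable (\<lambda>x. LEAST n. t x n \<or> B x \<le> n)"
proof -
  obtain T where T: "recursive1 T" "\<And>x y. T (prod_encode (enc x, enc y)) = enc (t x y)"
    using t by (rule computableE) (metis enc_pair fst_conv snd_conv)
  obtain gB where gB: "recursive1 gB" "\<And>x. gB (enc x) = enc (B x)" using B unfolding computable_def by blast
  define F where "F m c = (1 - T (prod_encode (c, m))) * (gB c - m)" for m c
  have r2: "recursive2 F" unfolding F_def
    by (rule recursive2_comp2[OF recursive2_mult recursive2_comp2[OF recursive2_diff recursive2_const recursive2_comp1[OF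
      T(1) recursive2_comp2[OF recursive2_prod_encode recursive2_arg2 recursive2_arg1]]]
          recursive2_comp2[OF recursive2_diff recursive2_comp1[OF gB(1) recursive2_arg2] recursive2_arg1]])
  have ex: "\<exists>m. F m c = 0" for c by (rule exI[of _ "gB c"]) (simp add: F_def)
  have eq: "F m (enc x) = 0 \<longleftrightarrow> t x m \<or> B x \<le> m" for m x
    using T(2)[of x m] gB(2)[of x] by (auto simp: F_def enc_bool_def)
  show ?thesis by (rule computableI[OF recursive1_Least[OF r2 ex]]) (simp add: eq)
qed

lemma computable_comp2:
  assumes H: "computable (\<lambda>p. F (fst p) (snd p))" and f: "computable f" and g: "computable g"
  shows "computable (\<lambda>x. F (f x) (g x))"
  by (rule computable_cong[OF computable_comp[OF H computable_pair[OF f g]]]) simp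

lemma computable_comp3:
  assumes H: "computable (\<lambda>p. F (fst p) (fst (snd p)) (snd (snd p)))" and f: "computable f" and g: "computable g"
    and h: "computable h"
  shows "computable (\<lambda>x. F (f x) (g x) (h x))"
  by (rule computable_cong[OF computable_comp[OF H computable_pair[OF f computable_pair[OF g h]]]]) simp

lemma computable_prod_encode[computable_intros]:
  assumes "computable f" "computable g"
  shows "computable (\<lambda>x. prod_encode (f x, g x))"
  using computable_enc[OF computable_pair[OF assms]] by simp

lemma computable_prod_decode[computable_intros]: "computable f \<Longrightarrow> computable (\<lambda>x. prod_decode (f x))"
  apply (erule computableE)
  subgoal for gf by (rule computableI[of gf]) (auto simp: enc_prod_def)
  done

lemma computable_list_decode[computable_intros]: "computable f \<Longrightarrow> computable (\<lambda>x. list_decode (f x))"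
  apply (erule computableE)
  subgoal for gf by (rule computableI[of gf]) (auto simp: enc_list_def enc_nat_def[abs_def])
  done

lemma computable_Cons[computable_intros]: "computable f \<Longrightarrow> computable g
  \<Longrightarrow> computable (\<lambda>x. f x # g x)"
  apply (erule computableE, erule computableE)
  subgoal for gf gg
    by (rule computableI[OF recursive1_comp[OF recursive1_Suc recursive1_comp2[OF recursive2_prod_encode, of gf gg]]])
      auto
  done

lemma computable_case_list[computable_intros]:
  assumes l: "computable l" and nl: "computable nl" and c: "computable (\<lambda>p. c (fst p) (fst (snd p)) (snd (snd p)))"
  shows "computable (\<lambda>x. case l x of [] \<Rightarrow> nl x | a # t \<Rightarrow> c x a t)"
proof -
  obtain gl where gl: "recursive1 gl" "\<And>x. gl (enc x) = enc (l x)" using l unfolding computable_def by blast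
  obtain gn where gn: "recursive1 gn" "\<And>x. gn (enc x) = enc (nl x)" using nl unfolding computable_def by blast
  obtain gc where gc: "recursive1 gc" "\<And>x a t. gc (prod_encode (enc x, prod_encode (enc a, enc t))) = enc (c x a t)"
    using c unfolding computable_def by (metis enc_pair fst_conv snd_conv)
  have r: "recursive1 (\<lambda>n. gc (prod_encode (n, gl n - 1)))"
    by (rule recursive1_comp[OF gc(1) recursive1_comp2[OF recursive2_prod_encode recursive1_id recursive1_comp2[OF
      recursive2_diff gl(1) recursive1_const]]])
  show ?thesis
  proof (rule computableI[OF recursive1_if_zero[OF gl(1) r gn(1)]])
    fix x show "(if gl (enc x) = 0 then gn (enc x) else gc (prod_encode (enc x, gl (enc x) - 1))) =
         enc (case l x of [] \<Rightarrow> nl x | a # t \<Rightarrow> c x a t)"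
      by (cases "l x") (simp_all add: gl gn gc)
  qed
qed

lemma enc_list_len: "length xs \<le> enc xs"
proof (induction xs)
  case (Cons a xs)
  have "enc xs \<le> prod_encode (enc a, enc xs)" by (rule le_prod_encode_2)
  then show ?case using Cons.IH by simp
qed simp

lemma computable_foldl[computable_intros]:
  fixes h :: "'a::encode \<Rightarrow> 'b::encode \<Rightarrow> 'c::encode \<Rightarrow> 'b"
  assumes h: "computable (\<lambda>p. h (fst p) (fst (snd p)) (snd (snd p)))" and z: "computable z" and l: "computable l"
  shows "computable (\<lambda>x. foldl (h x) (z x) (l x))"
proof -
  define stp where "stp x p = (case fst p of [] \<Rightarrow> p | a # t \<Rightarrow> (t, h x (snd p) a))"
    for x :: 'a and p :: "'c list \<times> 'b"
  have it: "length xs \<le> k \<Longrightarrow> (stp x ^^ k) (xs, acc) = ([], foldl (h x) acc xs)" for xs k acc x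
  proof (induction xs arbitrary: k acc)
    case Nil
    have "(stp x ^^ k) ([], acc) = ([], acc)" by (induction k) (auto simp: stp_def)
    then show ?case by simp
  next
    case (Cons a xs)
    then obtain k' where k: "k = Suc k'" "length xs \<le> k'" by (cases k) auto
    have "(stp x ^^ k) (a # xs, acc) = (stp x ^^ k') (stp x (a # xs, acc))"
      unfolding k(1) funpow_Suc_right by simp
    also have "\<dots> = (stp x ^^ k') (xs, h x acc a)" by (simp add: stp_def)
    also have "\<dots> = ([], foldl (h x) (h x acc a) xs)" using Cons.IH[OF k(2)] by simp
    finally show ?case by simp
  qed
  have hr: "computable (\<lambda>r. h (fst (fst r)) (snd (snd (fst r))) (fst (snd r)))"
    by (rule computable_cong[OF computable_comp[OF h, of "\<lambda>r. (fst (fst r), snd (snd (fst r)), fst (snd r))"]])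
       (intro computable_intros, simp)
  have cst: "computable (\<lambda>q. stp (fst q) (snd q))" unfolding stp_def
    by (intro computable_intros hr)
  have "computable (\<lambda>x. snd ((stp x ^^ enc (l x)) (l x, z x)))"
    by (intro computable_intros cst l z)
  then show ?thesis by (rule computable_cong) (simp add: it enc_list_len)
qed

lemma computable_rev[computable_intros]: "computable l \<Longrightarrow> computable (\<lambda>x. rev (l x))"
proof -
  assume l: "computable l"
  have C: "computable (\<lambda>x. foldl (\<lambda>acc a. a # acc) [] (l x))" by (intro computable_intros l)
  have E: "foldl (\<lambda>acc a. a # acc) acc xs = rev xs @ acc" for acc xs :: "'b list"
    by (induction xs arbitrary: acc) auto
  show ?thesis by (rule computable_cong[OF C]) (simp add: E)
qed

lemma computable_append[computable_intros]: "computable l \<Longrightarrow> computable m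
  \<Longrightarrow> computable (\<lambda>x. l x @ m x)"
proof -
  assume l: "computable l" and m: "computable m"
  have C: "computable (\<lambda>x. foldl (\<lambda>acc a. a # acc) (m x) (rev (l x)))" by (intro computable_intros l m)
  have E: "foldl (\<lambda>acc a. a # acc) acc xs = rev xs @ acc" for acc xs :: "'b list"
    by (induction xs arbitrary: acc) auto
  show ?thesis by (rule computable_cong[OF C]) (simp add: E)
qed

lemma computable_map[computable_intros]:
  fixes f :: "'a::encode \<Rightarrow> 'b::encode \<Rightarrow> 'c::encode"
  assumes f: "computable (\<lambda>p. f (fst p) (snd p))" and l: "computable l"
  shows "computable (\<lambda>x. map (f x) (l x))"
proof -
  have C: "computable (\<lambda>x. rev (foldl (\<lambda>acc a. f x a # acc) [] (l x)))"
    by (intro computable_intros l computable_comp2[OF f])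
  have E: "foldl (\<lambda>acc a. f x a # acc) acc xs = rev (map (f x) xs) @ acc" for acc xs x
    by (induction xs arbitrary: acc) auto
  show ?thesis by (rule computable_cong[OF C]) (simp add: E)
qed

lemma computable_filter[computable_intros]:
  fixes f :: "'a::encode \<Rightarrow> 'b::encode \<Rightarrow> bool"
  assumes f: "computable (\<lambda>p. f (fst p) (snd p))" and l: "computable l"
  shows "computable (\<lambda>x. filter (f x) (l x))"
proof -
  have C: "computable (\<lambda>x. rev (foldl (\<lambda>acc a. if f x a then a # acc else acc) [] (l x)))"
    by (intro computable_intros l computable_comp2[OF f])
  have E: "foldl (\<lambda>acc a. if f x a then a # acc else acc) acc xs = rev (filter (f x) xs) @ acc" for acc xs x
    by (induction xs arbitrary: acc) auto
  show ?thesis by (rule computable_cong[OF C]) (simp add: E)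
qed

lemma computable_concat[computable_intros]: "computable l \<Longrightarrow> computable (\<lambda>x. concat (l x))"
proof -
  assume l: "computable l"
  have C: "computable (\<lambda>x. foldl (\<lambda>acc a. acc @ a) [] (l x))" by (intro computable_intros l)
  have E: "foldl (\<lambda>acc a. acc @ a) acc xs = acc @ concat xs" for acc :: "'b list" and xs
    by (induction xs arbitrary: acc) auto
  show ?thesis by (rule computable_cong[OF C]) (simp add: E)
qed

lemma computable_length[computable_intros]: "computable l \<Longrightarrow> computable (\<lambda>x. length (l x))"
proof -
  assume l: "computable l"
  have C: "computable (\<lambda>x. foldl (\<lambda>acc a. Suc acc) 0 (l x))" by (intro computable_intros l)
  have E: "foldl (\<lambda>acc a. Suc acc) acc xs = acc + length xs" for acc :: nat and xs :: "'b list"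
    by (induction xs arbitrary: acc) auto
  show ?thesis by (rule computable_cong[OF C]) (simp add: E)
qed

lemma computable_ex[computable_intros]:
  fixes f :: "'a::encode \<Rightarrow> 'b::encode \<Rightarrow> bool"
  assumes f: "computable (\<lambda>p. f (fst p) (snd p))" and l: "computable l"
  shows "computable (\<lambda>x. \<exists>a\<in>set (l x). f x a)"
proof -
  have C: "computable (\<lambda>x. foldl (\<lambda>acc a. acc \<or> f x a) False (l x))"
    by (intro computable_intros l computable_comp2[OF f])
  have E: "foldl (\<lambda>acc a. acc \<or> f x a) acc xs = (acc \<or> (\<exists>a\<in>set xs. f x a))" for acc xs x
    by (induction xs arbitrary: acc) auto
  show ?thesis by (rule computable_cong[OF C]) (simp add: E)
qed

lemma computable_all[computable_intros]:
  fixes f :: "'a::encode \<Rightarrow> 'b::encode \<Rightarrow> bool"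
  assumes f: "computable (\<lambda>p. f (fst p) (snd p))" and l: "computable l"
  shows "computable (\<lambda>x. \<forall>a\<in>set (l x). f x a)"
proof -
  have C: "computable (\<lambda>x. foldl (\<lambda>acc a. acc \<and> f x a) True (l x))"
    by (intro computable_intros l computable_comp2[OF f])
  have E: "foldl (\<lambda>acc a. acc \<and> f x a) acc xs = (acc \<and> (\<forall>a\<in>set xs. f x a))" for acc xs x
    by (induction xs arbitrary: acc) auto
  show ?thesis by (rule computable_cong[OF C]) (simp add: E)
qed

lemma computable_tl[computable_intros]: "computable l \<Longrightarrow> computable (\<lambda>x. tl (l x))"
proof -
  assume l: "computable l"
  have "computable (\<lambda>x. case l x of [] \<Rightarrow> [] | a # t \<Rightarrow> t)" by (intro computable_intros l)
  then show ?thesis by (rule computable_cong) (simp split: list.split)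
qed

lemma computable_drop[computable_intros]: "computable n \<Longrightarrow> computable l
  \<Longrightarrow> computable (\<lambda>x. drop (n x) (l x))"
proof -
  assume n: "computable n" and l: "computable l"
  have C: "computable (\<lambda>x. ((\<lambda>xs. tl xs) ^^ n x) (l x))" by (intro computable_intros n l)
  have E: "((\<lambda>xs. tl xs) ^^ k) xs = drop k xs" for k and xs :: "'b list"
    by (induction k arbitrary: xs) (auto simp: drop_Suc drop_tl)
  show ?thesis by (rule computable_cong[OF C]) (simp add: E)
qed

definition nthd :: "'a \<Rightarrow> 'a list \<Rightarrow> nat \<Rightarrow> 'a" where
  "nthd d xs i = (case drop i xs of [] \<Rightarrow> d | a # t \<Rightarrow> a)"

lemma nthd_eq: "nthd d xs i = (if i < length xs then xs ! i else d)"
  by (auto simp: nthd_def Cons_nth_drop_Suc[symmetric] split: list.split)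

lemma computable_nthd[computable_intros]: "computable d \<Longrightarrow> computable l \<Longrightarrow> computable i
  \<Longrightarrow> computable (\<lambda>x. nthd (d x) (l x) (i x))"
  unfolding nthd_def by (intro computable_intros)

lemma computable_upt_0: "computable n \<Longrightarrow> computable (\<lambda>x. [0..<n x])"
proof -
  assume n: "computable n"
  have C: "computable (\<lambda>x. ((\<lambda>l. l @ [length l]) ^^ n x) [])" by (intro computable_intros n)
  have E: "((\<lambda>l. l @ [length l]) ^^ k) [] = [0..<k]" for k
    by (induction k) auto
  show ?thesis by (rule computable_cong[OF C]) (simp add: E)
qed

lemma computable_upt[computable_intros]: "computable a \<Longrightarrow> computable b
  \<Longrightarrow> computable (\<lambda>x. [a x..<b x])"
proof -
  assume a: "computable a" and b: "computable b"
  have C: "computable (\<lambda>x. map (\<lambda>i. a x + i) [0..<b x - a x])"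
    by (intro computable_intros computable_upt_0 a b computable_comp[OF a])
  have E: "map (\<lambda>i. m + i) [0..<k - m] = [m..<k]" for m k
    by (induction k) (auto simp: Suc_diff_le)
  show ?thesis by (rule computable_cong[OF C]) (simp add: E)
qed

lemma computable_replicate[computable_intros]: "computable n \<Longrightarrow> computable a
  \<Longrightarrow> computable (\<lambda>x. replicate (n x) (a x))"
proof -
  assume n: "computable n" and a: "computable a"
  have C: "computable (\<lambda>x. ((\<lambda>l. a x # l) ^^ n x) [])" by (intro computable_intros n a computable_comp[OF a])
  have E: "((\<lambda>l. c # l) ^^ k) [] = replicate k c" for k c
    by (induction k) auto
  show ?thesis by (rule computable_cong[OF C]) (simp add: E)
qed

lemma computable_max[computable_intros]:
  assumes f: "computable f" and g: "computable g"
  shows "computable (\<lambda>x. max (f x) (g x) :: nat)"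
  unfolding max_def by (intro computable_intros computable_comp[OF f] computable_comp[OF g])

lemma div_least: "(a::nat) div b = (LEAST q. (b = 0 \<or> a < b * Suc q) \<or> a \<le> q)"
proof (rule Least_equality[symmetric])
  show "(b = 0 \<or> a < b * Suc (a div b)) \<or> a \<le> a div b"
    by (cases "b = 0") (auto simp: dividend_less_times_div)
  fix y assume "(b = 0 \<or> a < b * Suc y) \<or> a \<le> y"
  then show "a div b \<le> y"
  proof (elim disjE)
    assume "b = 0" then show ?thesis by simp
  next
    assume "a < b * Suc y" then have "a div b < Suc y" by (simp add: less_mult_imp_div_less mult.commute)
    then show ?thesis by simp
  next
    assume "a \<le> y" then show ?thesis using div_le_dividend[of a b] by linarith
  qed
qed

lemma computable_div[computable_intros]:
  assumes f: "computable f" and g: "computable g"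
  shows "computable (\<lambda>x. f x div g x :: nat)"
  unfolding div_least by (intro computable_intros computable_comp[OF f] computable_comp[OF g])

lemma computable_mod[computable_intros]:
  assumes f: "computable f" and g: "computable g"
  shows "computable (\<lambda>x. f x mod g x :: nat)"
  unfolding minus_div_mult_eq_mod[symmetric] by (intro computable_intros computable_comp[OF f] computable_comp[OF g])

lemma computable_nat_dvd[computable_intros]:
  assumes f: "computable f" and g: "computable g"
  shows "computable (\<lambda>x. f x dvd (g x :: nat))"
  unfolding dvd_eq_mod_eq_0 by (intro computable_intros computable_comp[OF f] computable_comp[OF g])

lemma computable_nat_of_int[computable_intros]: "computable f \<Longrightarrow> computable (\<lambda>x. nat (f x :: int))"
  apply (erule computableE)
  subgoal for gf by (rule computableI[OF recursive1_comp[OF recursive1_fst_prod_decode, of gf]])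
    (auto simp: enc_int_def)
  done

lemma computable_nat_uminus[computable_intros]: "computable f \<Longrightarrow> computable (\<lambda>x. nat (- f x :: int))"
  apply (erule computableE)
  subgoal for gf by (rule computableI[OF recursive1_comp[OF recursive1_snd_prod_decode, of gf]])
    (auto simp: enc_int_def)
  done

lemma computable_int_diff_nat: "computable f \<Longrightarrow> computable g
  \<Longrightarrow> computable (\<lambda>x. int (f x) - int (g x))"
  apply (erule computableE, erule computableE)
  subgoal for gf gg
    by (rule computableI[OF recursive1_comp2[OF recursive2_prod_encode recursive1_comp2[OF recursive2_diff, of gf gg]
      recursive1_comp2[OF recursive2_diff, of gg gf]]])
       (auto simp: enc_int_def nat_diff_distrib)
  done

lemma computable_of_nat_int[computable_intros]: "computable f \<Longrightarrow> computable (\<lambda>x. int (f x))"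
  by (rule computable_cong[OF computable_int_diff_nat[OF _ computable_const[of 0]]]) auto

lemma computable_int_add[computable_intros]: "computable f \<Longrightarrow> computable g
  \<Longrightarrow> computable (\<lambda>x. f x + g x :: int)"
proof -
  assume f: "computable f" and g: "computable g"
  have "computable (\<lambda>x. int (nat (f x) + nat (g x)) - int (nat (- f x) + nat (- g x)))"
    by (intro computable_int_diff_nat computable_intros f g)
  then show ?thesis by (rule computable_cong) simp
qed

lemma computable_int_uminus[computable_intros]: "computable f \<Longrightarrow> computable (\<lambda>x. - f x :: int)"
proof -
  assume f: "computable f"
  have "computable (\<lambda>x. int (nat (- f x)) - int (nat (f x)))"
    by (intro computable_int_diff_nat computable_intros f)
  then show ?thesis by (rule computable_cong) simp
qed

lemma computable_int_diff[computable_intros]: "computable f \<Longrightarrow> computable g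
  \<Longrightarrow> computable (\<lambda>x. f x - g x :: int)"
proof -
  assume f: "computable f" and g: "computable g"
  have "computable (\<lambda>x. f x + - g x)" by (intro computable_intros f g)
  then show ?thesis by (rule computable_cong) simp
qed

lemma computable_int_mult[computable_intros]: "computable f \<Longrightarrow> computable g
  \<Longrightarrow> computable (\<lambda>x. f x * g x :: int)"
proof -
  assume f: "computable f" and g: "computable g"
  have C: "computable (\<lambda>x. int (nat (f x) * nat (g x) + nat (- f x) * nat (- g x)) -
                int (nat (f x) * nat (- g x) + nat (- f x) * nat (g x)))"
    by (intro computable_int_diff_nat computable_intros f g)
  have E: "int (nat a * nat b + nat (- a) * nat (- b)) - int (nat a * nat (- b) + nat (- a) * nat b) = a * b"
    for a b :: int
  proof -
    have "int (nat a * nat b + nat (- a) * nat (- b)) - int (nat a * nat (- b) + nat (- a) * nat b) =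
      (int (nat a) - int (nat (- a))) * (int (nat b) - int (nat (- b)))" by (simp add: algebra_simps)
    also have "\<dots> = a * b" by simp
    finally show ?thesis .
  qed
  show ?thesis by (rule computable_cong[OF C]) (rule E)
qed

lemma computable_int_less[computable_intros]: "computable f \<Longrightarrow> computable g
  \<Longrightarrow> computable (\<lambda>x. f x < (g x :: int))"
proof -
  assume f: "computable f" and g: "computable g"
  have "computable (\<lambda>x. nat (f x) + nat (- g x) < nat (g x) + nat (- f x))" by (intro computable_intros f g)
  then show ?thesis by (rule computable_cong) linarith
qed

lemma computable_int_le[computable_intros]: "computable f \<Longrightarrow> computable g
  \<Longrightarrow> computable (\<lambda>x. f x \<le> (g x :: int))"
proof -
  assume f: "computable f" and g: "computable g"
  have "computable (\<lambda>x. \<not> g x < f x)" by (intro computable_intros f g)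
  then show ?thesis by (rule computable_cong) linarith
qed

lemma computable_int_eq[computable_intros]: "computable f \<Longrightarrow> computable g
  \<Longrightarrow> computable (\<lambda>x. f x = (g x :: int))"
proof -
  assume f: "computable f" and g: "computable g"
  have "computable (\<lambda>x. f x \<le> g x \<and> g x \<le> f x)" by (intro computable_intros f g)
  then show ?thesis by (rule computable_cong) linarith
qed

lemma computable_int_abs[computable_intros]: "computable f \<Longrightarrow> computable (\<lambda>x. \<bar>f x\<bar> :: int)"
proof -
  assume f: "computable f"
  have "computable (\<lambda>x. int (nat (f x) + nat (- f x)))" by (intro computable_intros f)
  then show ?thesis by (rule computable_cong) linarith
qed

lemma computable_int_dvd[computable_intros]: "computable f \<Longrightarrow> computable g
  \<Longrightarrow> computable (\<lambda>x. f x dvd (g x :: int))"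
proof -
  assume f: "computable f" and g: "computable g"
  have "computable (\<lambda>x. nat \<bar>f x\<bar> dvd nat \<bar>g x\<bar>)" by (intro computable_intros f g)
  then show ?thesis by (rule computable_cong) (simp add: nat_dvd_iff)
qed

lemma computable_int_encode[computable_intros]: "computable f \<Longrightarrow> computable (\<lambda>x. int_encode (f x))"
proof -
  assume f: "computable f"
  have "computable (\<lambda>x. if 0 \<le> f x then 2 * nat (f x) else Suc (2 * nat (- f x - 1)))"
    by (intro computable_intros f)
  then show ?thesis by (rule computable_cong) (simp add: int_encode_def sum_encode_def)
qed

section \<open>Linear forms and formulas in disjunctive normal form\<close>

type_synonym lin = "int list \<times> int"

text \<open>An atom (k, d, t) encodes 0 < t (k = 0), d dvd t (k = 1) or \<not> d dvd t (k \<ge> 2),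
  with d read as max 1 \<bar>d\<bar>.\<close>

type_synonym atom = "nat \<times> int \<times> lin"

definition coeff :: "int list \<Rightarrow> nat \<Rightarrow> int" where "coeff cs i = nthd 0 cs i"

definition lval :: "lin \<Rightarrow> (nat \<Rightarrow> int) \<Rightarrow> int" where
  "lval l e = (\<Sum>i<length (fst l). coeff (fst l) i * e i) + snd l"

lemma coeff_eq: "coeff cs i = (if i < length cs then cs ! i else 0)"
  by (simp add: coeff_def nthd_eq)

lemma sum_coeff_ge: "length cs \<le> n \<Longrightarrow> (\<Sum>i<n. coeff cs i * e i) =
  (\<Sum>i<length cs. coeff cs i * e i)"
  by (rule sum.mono_neutral_right) (auto simp: coeff_eq)

lemma lval_alt: "length (fst l) \<le> n \<Longrightarrow> lval l e = (\<Sum>i<n. coeff (fst l) i * e i) + snd l"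
  by (simp add: lval_def sum_coeff_ge[of _ n])

definition ladd :: "lin \<Rightarrow> lin \<Rightarrow> lin" where
  "ladd l1 l2 = (map (\<lambda>i. coeff (fst l1) i + coeff (fst l2) i) [0..<max (length (fst l1)) (length (fst l2))],
                 snd l1 + snd l2)"

definition lscale :: "int \<Rightarrow> lin \<Rightarrow> lin" where
  "lscale k l = (map (\<lambda>c. k * c) (fst l), k * snd l)"

definition lconst :: "int \<Rightarrow> lin" where "lconst c = ([], c)"

definition lvar :: "nat \<Rightarrow> lin" where "lvar i = (replicate i 0 @ [1], 0)"

definition lzero :: "nat \<Rightarrow> lin \<Rightarrow> lin" where
  "lzero i l = (map (\<lambda>j. if j = i then 0 else coeff (fst l) j) [0..<length (fst l)], snd l)"

definition lsubst :: "nat \<Rightarrow> lin \<Rightarrow> lin \<Rightarrow> lin" where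
  "lsubst i s l = ladd (lzero i l) (lscale (coeff (fst l) i) s)"

lemma coeff_ladd[simp]: "coeff (fst (ladd l1 l2)) j = coeff (fst l1) j + coeff (fst l2) j"
  by (auto simp: ladd_def coeff_eq)

lemma coeff_lscale[simp]: "coeff (fst (lscale k l)) j = k * coeff (fst l) j"
  by (auto simp: lscale_def coeff_eq)

lemma coeff_lconst[simp]: "coeff (fst (lconst c)) j = 0"
  by (auto simp: lconst_def coeff_eq)

lemma coeff_lvar[simp]: "coeff (fst (lvar i)) j = (if j = i then 1 else 0)"
  by (auto simp: lvar_def coeff_eq nth_append)

lemma coeff_lzero[simp]: "coeff (fst (lzero i l)) j = (if j = i then 0 else coeff (fst l) j)"
  by (auto simp: lzero_def coeff_eq)

lemma snd_ladd[simp]: "snd (ladd l1 l2) = snd l1 + snd l2" by (simp add: ladd_def)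

lemma snd_lscale[simp]: "snd (lscale k l) = k * snd l" by (simp add: lscale_def)

lemma snd_lzero[simp]: "snd (lzero i l) = snd l" by (simp add: lzero_def)

lemma snd_lvar[simp]: "snd (lvar i) = 0" by (simp add: lvar_def)

lemma len_lscale[simp]: "length (fst (lscale k l)) = length (fst l)" by (simp add: lscale_def)

lemma len_lzero[simp]: "length (fst (lzero i l)) = length (fst l)" by (simp add: lzero_def)

lemma len_lvar[simp]: "length (fst (lvar i)) = Suc i" by (simp add: lvar_def)

lemma lval_ladd[simp]: "lval (ladd l1 l2) e = lval l1 e + lval l2 e"
proof -
  define n where "n = max (length (fst l1)) (length (fst l2))"
  have "length (fst (ladd l1 l2)) \<le> n" by (simp add: ladd_def n_def)
  then have "lval (ladd l1 l2) e = (\<Sum>i<n. coeff (fst (ladd l1 l2)) i * e i) + snd (ladd l1 l2)"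
    by (rule lval_alt)
  also have "\<dots> = (\<Sum>i<n. coeff (fst l1) i * e i) + snd l1 + ((\<Sum>i<n. coeff (fst l2) i * e i) + snd l2)"
    by (simp add: sum.distrib algebra_simps)
  also have "\<dots> = lval l1 e + lval l2 e"
    by (simp add: lval_alt[symmetric] n_def)
  finally show ?thesis .
qed

lemma lval_lscale[simp]: "lval (lscale k l) e = k * lval l e"
proof -
  have "lval (lscale k l) e = (\<Sum>i<length (fst l). coeff (fst (lscale k l)) i * e i) + snd (lscale k l)"
    by (rule lval_alt) simp
  also have "\<dots> = k * lval l e" by (simp add: lval_def sum_distrib_left algebra_simps)
  finally show ?thesis .
qed

lemma lval_lconst[simp]: "lval (lconst c) e = c"
  by (simp add: lval_def lconst_def)

lemma lval_lvar[simp]: "lval (lvar i) e = e i"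
proof -
  have "lval (lvar i) e = (\<Sum>j<Suc i. coeff (fst (lvar i)) j * e j) + snd (lvar i)"
    by (rule lval_alt) simp
  also have "\<dots> = e i" by simp
  finally show ?thesis .
qed

lemma lval_lzero: "lval (lzero i l) e = lval l (e(i := 0))"
proof -
  have "lval (lzero i l) e = (\<Sum>j<length (fst l). coeff (fst (lzero i l)) j * e j) + snd (lzero i l)"
    by (rule lval_alt) simp
  also have "\<dots> = lval l (e(i := 0))"
    by (simp add: lval_def) (rule sum.cong, auto)
  finally show ?thesis .
qed

lemma lval_upd: "lval l (e(i := v)) = lval (lzero i l) e + coeff (fst l) i * v"
proof -
  define n where "n = length (fst l)"
  have "lval l (e(i := v)) = (\<Sum>j<n. coeff (fst l) j * (e(i := v)) j) + snd l"
    by (simp add: lval_def n_def)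
  also have "(\<Sum>j<n. coeff (fst l) j * (e(i := v)) j) =
      (\<Sum>j<n. coeff (fst (lzero i l)) j * e j) + (\<Sum>j<n. if j = i then coeff (fst l) j * v else 0)"
  proof -
    have "(\<Sum>j<n. coeff (fst l) j * (e(i := v)) j) =
      (\<Sum>j<n. coeff (fst (lzero i l)) j * e j + (if j = i then coeff (fst l) j * v else 0))"
      by (rule sum.cong) auto
    then show ?thesis by (simp only: sum.distrib)
  qed
  also have "(\<Sum>j<n. if j = i then coeff (fst l) j * v else 0) = coeff (fst l) i * v"
    by (auto simp: coeff_eq n_def)
  also have "(\<Sum>j<n. coeff (fst (lzero i l)) j * e j) + coeff (fst l) i * v + snd l =
      lval (lzero i l) e + coeff (fst l) i * v"
  proof -
    have "lval (lzero i l) e = (\<Sum>j<n. coeff (fst (lzero i l)) j * e j) + snd (lzero i l)"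
      by (rule lval_alt) (simp add: n_def)
    then show ?thesis by simp
  qed
  finally show ?thesis unfolding fun_upd_def by simp
qed

lemma lval_lzero_upd[simp]: "lval (lzero i l) (e(i := v)) = lval (lzero i l) e"
  using lval_upd[of "lzero i l" e i v] by (simp add: lval_lzero)

lemma lval_lsubst[simp]: "lval (lsubst i s l) e = lval l (e(i := lval s e))"
  by (simp add: lsubst_def lval_upd[of l e i])

lemma lval_coeff0: "coeff (fst l) i = 0 \<Longrightarrow> lval l (e(i := v)) = lval l (e(i := w))"
  by (simp add: lval_upd)

definition akind :: "atom \<Rightarrow> nat" where "akind a = fst a"

definition amod :: "atom \<Rightarrow> int" where "amod a = fst (snd a)"

definition aterm :: "atom \<Rightarrow> lin" where "aterm a = snd (snd a)"

definition amodulus :: "atom \<Rightarrow> int" where "amodulus a = max 1 \<bar>amod a\<bar>"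

lemma atom_sel[simp]: "akind (k, d, t) = k" "amod (k, d, t) = d" "aterm (k, d, t) = t"
  by (simp_all add: akind_def amod_def aterm_def)

lemma amodulus_pos: "0 < amodulus a" by (simp add: amodulus_def)

definition aval :: "atom \<Rightarrow> (nat \<Rightarrow> int) \<Rightarrow> bool" where
  "aval a e = (if akind a = 0 then 0 < lval (aterm a) e
               else if akind a = 1 then amodulus a dvd lval (aterm a) e
               else \<not> amodulus a dvd lval (aterm a) e)"

definition cval :: "atom list \<Rightarrow> (nat \<Rightarrow> int) \<Rightarrow> bool" where
  "cval C e = (\<forall>a\<in>set C. aval a e)"

definition dval :: "atom list list \<Rightarrow> (nat \<Rightarrow> int) \<Rightarrow> bool" where
  "dval D e = (\<exists>C\<in>set D. cval C e)"

definition aneg :: "atom \<Rightarrow> atom" where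
  "aneg a = (if akind a = 0 then (0, 0, ladd (lconst 1) (lscale (-1) (aterm a)))
                else if akind a = 1 then (2, amod a, aterm a) else (1, amod a, aterm a))"

lemma aval_aneg[simp]: "aval (aneg a) e = (\<not> aval a e)"
  by (auto simp: aneg_def aval_def amodulus_def)

definition dand :: "atom list list \<Rightarrow> atom list list \<Rightarrow> atom list list" where
  "dand D1 D2 = concat (map (\<lambda>C1. map (\<lambda>C2. C1 @ C2) D2) D1)"

lemma dval_dand[simp]: "dval (dand D1 D2) e = (dval D1 e \<and> dval D2 e)"
  by (auto simp: dand_def dval_def cval_def)

definition cneg :: "atom list \<Rightarrow> atom list list" where
  "cneg C = map (\<lambda>a. [aneg a]) C"

lemma dval_cneg[simp]: "dval (cneg C) e = (\<not> cval C e)"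
  by (auto simp: cneg_def dval_def cval_def)

definition dneg :: "atom list list \<Rightarrow> atom list list" where
  "dneg D = foldl (\<lambda>acc C. dand acc (cneg C)) [[]] D"

lemma dval_Nil[simp]: "dval [] e = False" and dval_Cons[simp]: "dval (C # D) e = (cval C e \<or> dval D e)"
  by (auto simp: dval_def)

lemma cval_Nil[simp]: "cval [] e = True" and cval_Cons[simp]: "cval (a # C) e = (aval a e \<and> cval C e)"
  by (auto simp: cval_def)

lemma dval_dneg_aux: "dval (foldl (\<lambda>acc C. dand acc (cneg C)) acc D) e = (dval acc e \<and> \<not> dval D e)"
  by (induction D arbitrary: acc) auto

lemma dval_dneg[simp]: "dval (dneg D) e = (\<not> dval D e)"
  by (simp add: dneg_def dval_dneg_aux)

section \<open>Cooper's quantifier elimination\<close>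

definition acoef :: "nat \<Rightarrow> atom \<Rightarrow> int" where "acoef i a = coeff (fst (aterm a)) i"

definition scale_atom :: "nat \<Rightarrow> int \<Rightarrow> atom \<Rightarrow> atom" where
  "scale_atom i L a = (if acoef i a = 0 then a else
     (akind a, (L div \<bar>acoef i a\<bar>) * amod a,
      ladd (lzero i (lscale (L div \<bar>acoef i a\<bar>) (aterm a))) (lscale (sgn (acoef i a)) (lvar i))))"

definition asubst :: "nat \<Rightarrow> lin \<Rightarrow> atom \<Rightarrow> atom" where
  "asubst i s a = (akind a, amod a, lsubst i s (aterm a))"

lemma aval_asubst[simp]: "aval (asubst i s a) e = aval a (e(i := lval s e))"
  by (simp add: asubst_def aval_def amodulus_def)

text \<open>Formula variables range over the naturals: the atom x_i + 1 > 0 records x_i \<ge> 0.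
  After substituting L * x_i for x_i, where L is a common multiple of the coefficients of x_i,
  every atom is scaled so that x_i has coefficient -1, 0 or 1. The extra atom L dvd x_i then
  records the substitution.\<close>

definition conj_nonneg :: "nat \<Rightarrow> atom list \<Rightarrow> atom list" where
  "conj_nonneg i C = (0, 0, ladd (lvar i) (lconst 1)) # C"

definition conj_coeff_prod :: "nat \<Rightarrow> atom list \<Rightarrow> int" where
  "conj_coeff_prod i C = foldl (\<lambda>m a. if acoef i a \<noteq> 0 then m * \<bar>acoef i a\<bar> else m) 1
    (conj_nonneg i C)"

definition conj_unit :: "nat \<Rightarrow> atom list \<Rightarrow> atom list" where
  "conj_unit i C = (1, conj_coeff_prod i C, lvar i) # map (scale_atom i (conj_coeff_prod i C)) (conj_nonneg i C)"

definition conj_period :: "nat \<Rightarrow> atom list \<Rightarrow> int" where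
  "conj_period i C = foldl (\<lambda>m a. if akind a \<noteq> 0 then m * amodulus a else m) 1 (conj_unit i C)"

definition conj_lower_bounds :: "nat \<Rightarrow> atom list \<Rightarrow> atom list" where
  "conj_lower_bounds i C = filter (\<lambda>a. akind a = 0 \<and> acoef i a = 1) (conj_unit i C)"

definition elim_candidates :: "nat \<Rightarrow> atom list \<Rightarrow> lin list" where
  "elim_candidates i C = concat (map (\<lambda>b. map (\<lambda>j. ladd (lscale (-1) (lzero i (aterm b))) (lconst (int j)))
      [1..<nat (conj_period i C) + 1]) (conj_lower_bounds i C))"

definition elim_conj :: "nat \<Rightarrow> atom list \<Rightarrow> atom list list" where
  "elim_conj i C = map (\<lambda>s. map (asubst i s) (conj_unit i C)) (elim_candidates i C)"

definition elim_disj :: "nat \<Rightarrow> atom list list \<Rightarrow> atom list list" where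
  "elim_disj i D = concat (map (elim_conj i) D)"

lemma foldl_prod_pos:
  "0 < (m::int) \<Longrightarrow> (\<And>a. a \<in> set xs \<Longrightarrow> P a \<Longrightarrow> 0 < f a)
    \<Longrightarrow> 0 < foldl (\<lambda>m a. if P a then m * f a else m) m xs"
proof (induction xs arbitrary: m)
  case (Cons a xs)
  have "0 < (if P a then m * f a else m)" using Cons.prems by auto
  then show ?case using Cons.IH[of "if P a then m * f a else m"] Cons.prems(2) by auto
qed simp

lemma foldl_prod_dvd:
  "(\<And>a. a \<in> set xs \<Longrightarrow> P a \<Longrightarrow> 0 < f a) \<Longrightarrow> x \<in> set xs \<Longrightarrow> P x \<Longrightarrow>
    (f x :: int) dvd foldl (\<lambda>m a. if P a then m * f a else m) m xs"
proof (induction xs arbitrary: m)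
  case (Cons a xs)
  show ?case
  proof (cases "x = a")
    case True
    have "f x dvd (if P a then m * f a else m)" using True Cons.prems by simp
    moreover have "(if P a then m * f a else m) dvd foldl (\<lambda>m a. if P a then m * f a else m)
      (if P a then m * f a else m) xs"
    proof -
      have "m' dvd foldl (\<lambda>m a. if P a then m * f a else m) m' ys" for m' ys
        by (induction ys arbitrary: m') (auto intro: dvd_mult_left)
      then show ?thesis .
    qed
    ultimately show ?thesis by (auto intro: dvd_trans)
  next
    case False then show ?thesis using Cons by auto
  qed
qed simp

lemma conj_coeff_prod_pos: "0 < conj_coeff_prod i C"
  unfolding conj_coeff_prod_def by (rule foldl_prod_pos) auto

lemma acoef_dvd_conj_coeff_prod: "a \<in> set (conj_nonneg i C) \<Longrightarrow> acoef i a \<noteq> 0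
  \<Longrightarrow> \<bar>acoef i a\<bar> dvd conj_coeff_prod i C"
  unfolding conj_coeff_prod_def by (rule foldl_prod_dvd) auto

lemma conj_period_pos: "0 < conj_period i C"
  unfolding conj_period_def by (rule foldl_prod_pos) (auto simp: amodulus_pos)

lemma amodulus_dvd_conj_period: "a \<in> set (conj_unit i C) \<Longrightarrow> akind a \<noteq> 0
  \<Longrightarrow> amodulus a dvd conj_period i C"
  unfolding conj_period_def by (rule foldl_prod_dvd) (auto simp: amodulus_pos)

lemma aval_cong: "lval (aterm a) e1 = lval (aterm a) e2 \<Longrightarrow> aval a e1 = aval a e2"
  by (simp add: aval_def)

lemma acoef_scale[simp]: "acoef i (scale_atom i L a) = sgn (acoef i a)"
  by (auto simp: scale_atom_def acoef_def)

lemma akind_scale[simp]: "akind (scale_atom i L a) = akind a"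
  by (auto simp: scale_atom_def)

lemma aval_scale_atom:
  assumes dvd': "acoef i a \<noteq> 0 \<Longrightarrow> \<bar>acoef i a\<bar> dvd L" and L: "0 < L"
  shows "aval (scale_atom i L a) (e(i := L * x)) = aval a (e(i := x))"
proof (cases "acoef i a = 0")
  case True
  then show ?thesis unfolding scale_atom_def using True
    by (auto intro!: aval_cong lval_coeff0 simp: acoef_def)
next
  case False
  have dvd: "\<bar>acoef i a\<bar> dvd L" using dvd' False by blast
  define c where "c = acoef i a"
  define m where "m = L div \<bar>c\<bar>"
  define t where "t = aterm a"
  have Lm: "L = m * \<bar>c\<bar>" using dvd unfolding m_def c_def by simp
  have cpos: "0 < \<bar>c\<bar>" using False c_def by simp
  have "0 < m * \<bar>c\<bar>" using Lm L by simp
  then have mpos: "0 < m" using cpos by (simp add: zero_less_mult_iff)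
  have mc: "m * c = sgn c * L" by (metis Lm mult.commute mult.left_commute sgn_mult_abs)
  have t_upd: "lval t (e(i := x)) = lval t (e(i := 0)) + c * x"
    using lval_upd[of t e i x] lval_lzero[of i t e] unfolding c_def t_def acoef_def by simp
  have new: "lval (ladd (lzero i (lscale m t)) (lscale (sgn c) (lvar i))) (e(i := L * x)) =
      m * lval t (e(i := x))"
    using mc by (simp add: lval_lzero t_upd algebra_simps)
  have sa: "scale_atom i L a = (akind a, m * amod a, ladd (lzero i (lscale m t)) (lscale (sgn c) (lvar i)))"
    using False unfolding scale_atom_def m_def c_def t_def by simp
  have dvdeq: "max 1 \<bar>m * d\<bar> dvd m * v \<longleftrightarrow> max 1 \<bar>d\<bar> dvd v" for d v :: int
  proof (cases "d = 0")
    case True then show ?thesis by simp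
  next
    case False
    then have "max 1 \<bar>m * d\<bar> = m * \<bar>d\<bar>" "max 1 \<bar>d\<bar> = \<bar>d\<bar>" using mpos
      by (auto simp: abs_mult max_def) (smt (verit) mult_le_cancel_left1)
    then show ?thesis using mpos by (simp add: dvd_mult_cancel_left)
  qed
  show ?thesis
    unfolding sa aval_def[of "(akind a, m * amod a, _)"] atom_sel new aval_def[of a] t_def[symmetric]
    using mpos dvdeq[of "amod a" "lval t (e(i := x))"]
    by (auto simp: amodulus_def zero_less_mult_iff)
qed

lemma ex_nonneg_iff_conj_nonneg: "(\<exists>x\<ge>0. cval C (e(i := x))) = (\<exists>x. cval (conj_nonneg i C) (e(i := x)))"
  by (auto simp: conj_nonneg_def aval_def)

lemma aval_scale_conj_nonneg: "a \<in> set (conj_nonneg i C) \<Longrightarrow>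
    aval (scale_atom i (conj_coeff_prod i C) a) (e(i := conj_coeff_prod i C * x)) = aval a (e(i := x))"
  by (rule aval_scale_atom[OF acoef_dvd_conj_coeff_prod conj_coeff_prod_pos])

lemma ex_conj_nonneg_iff_conj_unit: "(\<exists>x. cval (conj_nonneg i C) (e(i := x))) =
  (\<exists>y. cval (conj_unit i C) (e(i := y)))"
proof
  assume "\<exists>x. cval (conj_nonneg i C) (e(i := x))"
  then obtain x where x: "cval (conj_nonneg i C) (e(i := x))" by blast
  have "aval (1, conj_coeff_prod i C, lvar i) (e(i := conj_coeff_prod i C * x))" using conj_coeff_prod_pos[of i C]
    by (simp add: aval_def amodulus_def)
  moreover have "\<forall>a\<in>set (conj_nonneg i C). aval (scale_atom i (conj_coeff_prod i C) a)
    (e(i := conj_coeff_prod i C * x))"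
    using x aval_scale_conj_nonneg unfolding cval_def by blast
  ultimately have "cval (conj_unit i C) (e(i := conj_coeff_prod i C * x))"
    unfolding conj_unit_def cval_def by auto
  then show "\<exists>y. cval (conj_unit i C) (e(i := y))" by blast
next
  assume "\<exists>y. cval (conj_unit i C) (e(i := y))"
  then obtain y where y: "cval (conj_unit i C) (e(i := y))" by blast
  then have "conj_coeff_prod i C dvd y" using conj_coeff_prod_pos[of i C] by (simp add: conj_unit_def aval_def amodulus_def)
  then obtain x where yx: "y = conj_coeff_prod i C * x" by blast
  have "\<forall>a\<in>set (conj_nonneg i C). aval (scale_atom i (conj_coeff_prod i C) a) (e(i := conj_coeff_prod i C * x))"
    using y unfolding yx conj_unit_def cval_def by auto
  then have "cval (conj_nonneg i C) (e(i := x))"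
    using aval_scale_conj_nonneg unfolding cval_def by blast
  then show "\<exists>x. cval (conj_nonneg i C) (e(i := x))" by blast
qed

lemma dvd_add_mult_diff_iff: "(d::int) dvd \<delta> \<Longrightarrow> (d dvd x + c * (y - \<delta>)) = (d dvd x + c * y)"
proof -
  assume d: "d dvd \<delta>"
  have eq: "x + c * (y - \<delta>) = (x + c * y) + - (c * \<delta>)" by (simp add: algebra_simps)
  have "d dvd - (c * \<delta>)" using d by simp
  then show ?thesis by (simp only: eq dvd_add_left_iff)
qed

lemma ex_least_int_bounded_below:
  fixes P :: "int \<Rightarrow> bool"
  assumes "P y" and bound: "\<And>z. P z \<Longrightarrow> c < z"
  shows "\<exists>y0. P y0 \<and> (\<forall>z. P z \<longrightarrow> y0 \<le> z)"
proof -
  define k0 where "k0 = (LEAST k::nat. P (c + 1 + int k))"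
  have "P (c + 1 + int (nat (y - c - 1)))" using assms by simp
  then have "P (c + 1 + int k0)" unfolding k0_def by (rule LeastI)
  moreover have "c + 1 + int k0 \<le> z" if "P z" for z
  proof -
    have "P (c + 1 + int (nat (z - c - 1)))" using that bound[OF that] by simp
    then have "k0 \<le> nat (z - c - 1)" unfolding k0_def by (rule Least_le)
    then show ?thesis using bound[OF that] by linarith
  qed
  ultimately show ?thesis by blast
qed

text \<open>Cooper's argument, for a conjunction in which x_i has coefficients in {-1, 0, 1} and which
  bounds x_i from below: if the least solution y0 exceeded every lower bound by more than \<delta>, then
  y0 - \<delta> would be a smaller solution, since the divisibility atoms are \<delta>-periodic in x_i and
  decreasing x_i can only violate a lower bound.\<close>

lemma cooper_witness:
  fixes Cs :: "atom list" and \<delta> :: int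
  assumes coef: "\<forall>a\<in>set Cs. acoef i a \<in> {-1, 0, 1}"
    and b0: "b0 \<in> set Cs" "akind b0 = 0" "acoef i b0 = 1"
    and dpos: "0 < \<delta>" and ddvd: "\<forall>a\<in>set Cs. akind a \<noteq> 0 \<longrightarrow> amodulus a dvd \<delta>"
    and wit: "cval Cs (e(i := y))"
  shows "\<exists>b\<in>set Cs. akind b = 0 \<and> acoef i b = 1 \<and>
     (\<exists>j::nat. 1 \<le> j \<and> j \<le> nat \<delta> \<and> cval Cs (e(i := - lval (lzero i (aterm b)) e + int j)))"
proof -
  define r where "r a = lval (lzero i (aterm a)) e" for a
  have V: "lval (aterm a) (e(i := z)) = r a + acoef i a * z" for a z
    by (simp add: r_def lval_upd acoef_def)
  have AV: "aval a (e(i := z)) = (if akind a = 0 then 0 < r a + acoef i a * z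
      else if akind a = 1 then amodulus a dvd r a + acoef i a * z else \<not> amodulus a dvd r a + acoef i a * z)"
    for a z by (simp only: aval_def V)
  define W where "W z = cval Cs (e(i := z))" for z
  have above: "- r b < z" if "W z" "b \<in> set Cs" "akind b = 0" "acoef i b = 1" for b z
    using that unfolding W_def cval_def by (auto simp: AV)
  obtain y0 where Wy0: "W y0" and ymin: "\<And>z. W z \<Longrightarrow> y0 \<le> z"
    using ex_least_int_bounded_below[of W y "- r b0"] wit above[OF _ b0] unfolding W_def by blast
  have "\<exists>b\<in>set Cs. akind b = 0 \<and> acoef i b = 1 \<and> y0 \<le> - r b + \<delta>"
  proof (rule ccontr)
    assume "\<not> ?thesis"
    then have big: "\<And>b. b \<in> set Cs \<Longrightarrow> akind b = 0 \<Longrightarrow> acoef i b = 1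
      \<Longrightarrow> - r b + \<delta> < y0" by force
    have "aval a (e(i := y0 - \<delta>))" if a: "a \<in> set Cs" for a
    proof -
      have ay0: "aval a (e(i := y0))" using Wy0 a unfolding W_def cval_def by blast
      show ?thesis
      proof (cases "akind a = 0")
        case False
        then have "(amodulus a dvd r a + acoef i a * (y0 - \<delta>)) = (amodulus a dvd r a + acoef i a * y0)"
          using ddvd a by (intro dvd_add_mult_diff_iff) blast
        then show ?thesis using ay0 False unfolding AV by simp
      next
        case True
        have "acoef i a \<in> {-1, 0, 1}" using coef a by blast
        then have "0 < r a + acoef i a * (y0 - \<delta>)"
          using ay0 True big[OF a True] dpos unfolding AV by auto
        then show ?thesis unfolding AV using True by simp
      qed
    qed
    then have "y0 \<le> y0 - \<delta>" using ymin unfolding W_def cval_def by blast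
    then show False using dpos by simp
  qed
  then obtain b where b: "b \<in> set Cs" "akind b = 0" "acoef i b = 1" "y0 \<le> - r b + \<delta>" by blast
  define j where "j = nat (y0 + r b)"
  have "1 \<le> j" "j \<le> nat \<delta>" "y0 = - r b + int j" using b above[OF Wy0 b(1-3)] unfolding j_def by auto
  then show ?thesis using b Wy0 unfolding W_def r_def by (intro bexI[of _ b]) auto
qed

lemma acoef_lvar: "acoef i (k, d, lvar i) = 1" by (simp add: acoef_def)

lemma acoef_conj_unit: assumes "a \<in> set (conj_unit i C)" shows "acoef i a \<in> {-1, 0, 1}"
proof -
  have s: "sgn c \<in> {-1, 0, 1::int}" for c by (auto simp: sgn_if)
  from assms have "a = (1, conj_coeff_prod i C, lvar i) \<or> (\<exists>a'. a = scale_atom i (conj_coeff_prod i C) a')"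
    unfolding conj_unit_def by auto
  then show ?thesis
  proof (elim disjE exE)
    assume "a = (1, conj_coeff_prod i C, lvar i)" then show ?thesis using acoef_lvar by simp
  next
    fix a' assume "a = scale_atom i (conj_coeff_prod i C) a'"
    then have "acoef i a = sgn (acoef i a')" by simp
    then show ?thesis using s by metis
  qed
qed

lemma nonneg_atom_in_conj_unit:
  "scale_atom i (conj_coeff_prod i C) (0, 0, ladd (lvar i) (lconst 1)) \<in> set (conj_unit i C)"
  by (simp add: conj_unit_def conj_nonneg_def)

lemma nonneg_atom_props: "akind (scale_atom i L (0, 0, ladd (lvar i) (lconst 1))) = 0"
  "acoef i (scale_atom i L (0, 0, ladd (lvar i) (lconst 1))) = 1"
  by (simp_all only: akind_scale acoef_scale) (simp_all add: acoef_def)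

lemma mem_elim_candidates:
  assumes "b \<in> set (conj_lower_bounds i C)" "1 \<le> j" "j \<le> nat (conj_period i C)"
  shows "ladd (lscale (-1) (lzero i (aterm b))) (lconst (int j)) \<in> set (elim_candidates i C)"
proof -
  have j: "j \<in> set [1..<nat (conj_period i C) + 1]" unfolding set_upt using assms(2,3) by simp
  show ?thesis unfolding elim_candidates_def set_concat set_map image_image
    by (rule UN_I[OF assms(1)]) (rule imageI[OF j])
qed

lemma dval_elim_conj: "dval (elim_conj i C) e = (\<exists>x\<ge>0. cval C (e(i := x)))"
proof -
  have "dval (elim_conj i C) e = (\<exists>s\<in>set (elim_candidates i C). cval (conj_unit i C) (e(i := lval s e)))"
    by (auto simp: elim_conj_def dval_def cval_def)
  also have "\<dots> = (\<exists>y. cval (conj_unit i C) (e(i := y)))"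
  proof
    assume "\<exists>s\<in>set (elim_candidates i C). cval (conj_unit i C) (e(i := lval s e))"
    then show "\<exists>y. cval (conj_unit i C) (e(i := y))" by blast
  next
    assume "\<exists>y. cval (conj_unit i C) (e(i := y))"
    then obtain y where y: "cval (conj_unit i C) (e(i := y))" by blast
    obtain b j where b: "b \<in> set (conj_unit i C)" "akind b = 0" "acoef i b = 1"
      and j: "1 \<le> j" "j \<le> nat (conj_period i C)"
      and w: "cval (conj_unit i C) (e(i := - lval (lzero i (aterm b)) e + int j))"
      using cooper_witness[OF _ nonneg_atom_in_conj_unit nonneg_atom_props conj_period_pos _ y] acoef_conj_unit
        amodulus_dvd_conj_period by blast
    have bLB: "b \<in> set (conj_lower_bounds i C)" using b unfolding conj_lower_bounds_def by simp
    have "ladd (lscale (-1) (lzero i (aterm b))) (lconst (int j)) \<in> set (elim_candidates i C)"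
      by (rule mem_elim_candidates[OF bLB j])
    then show "\<exists>s\<in>set (elim_candidates i C). cval (conj_unit i C) (e(i := lval s e))"
      using w by (intro bexI) auto
  qed
  also have "\<dots> = (\<exists>x\<ge>0. cval C (e(i := x)))"
    by (simp add: ex_nonneg_iff_conj_nonneg ex_conj_nonneg_iff_conj_unit)
  finally show ?thesis .
qed

lemma dval_elim_disj: "dval (elim_disj i D) e = (\<exists>x\<ge>0. dval D (e(i := x)))"
proof -
  have "dval (elim_disj i D) e = (\<exists>C\<in>set D. dval (elim_conj i C) e)"
    by (auto simp: elim_disj_def dval_def)
  also have "\<dots> = (\<exists>C\<in>set D. \<exists>x\<ge>0. cval C (e(i := x)))" by (simp add: dval_elim_conj)
  also have "\<dots> = (\<exists>x\<ge>0. dval D (e(i := x)))" by (auto simp: dval_def)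
  finally show ?thesis .
qed

section \<open>Translation of formulas over an eventually periodic set\<close>

primrec tm_lin :: "tm \<Rightarrow> lin" where
  "tm_lin (Var i) = lvar i"
| "tm_lin Zer = lconst 0"
| "tm_lin One = lconst 1"
| "tm_lin (Plus s t) = ladd (tm_lin s) (tm_lin t)"

lemma lval_tm_lin[simp]: "lval (tm_lin t) (\<lambda>j. int (e j)) = int (tm_val e t)"
  by (induction t) auto

type_synonym periodic_descr = "int list \<times> int list \<times> int"

definition eq_dnf :: "lin \<Rightarrow> atom list list" where
  "eq_dnf l = [[(0, 0, ladd l (lconst 1)), (0, 0, ladd (lconst 1) (lscale (-1) l))]]"

lemma dval_eq_dnf[simp]: "dval (eq_dnf l) e = (lval l e = 0)"
  by (auto simp: eq_dnf_def aval_def)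

definition lsub_const :: "lin \<Rightarrow> int \<Rightarrow> lin" where "lsub_const l u = ladd l (lconst (- u))"

lemma lval_lsub_const[simp]: "lval (lsub_const l u) e = lval l e - u"
  by (simp add: lsub_const_def)

definition member_dnf :: "periodic_descr \<Rightarrow> lin \<Rightarrow> atom list list" where
  "member_dnf P l = map (\<lambda>u. [(0, 0, ladd (lsub_const l u) (lconst 1)),
    (0, 0, ladd (lconst 1) (lscale (-1) (lsub_const l u)))]) (fst P)
     @ map (\<lambda>u. [(0, 0, ladd (lsub_const l u) (lconst 1)), (1, snd (snd P), lsub_const l u)]) (fst (snd P))"

lemma dval_member_dnf: "dval (member_dnf P l) e = ((\<exists>u\<in>set (fst P). lval l e = u) \<or>
     (\<exists>u\<in>set (fst (snd P)). u \<le> lval l e \<and> max 1 \<bar>snd (snd P)\<bar> dvd lval l e - u))"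
proof -
  have dapp: "dval (xs @ ys) e = (dval xs e \<or> dval ys e)" for xs ys by (auto simp: dval_def)
  have dmap: "dval (map F us) e = (\<exists>u\<in>set us. cval (F u) e)" for F and us :: "int list"
    by (auto simp: dval_def)
  have 1: "cval [(0, 0, ladd (lsub_const l u) (lconst 1)), (0, 0, ladd (lconst 1) (lscale (-1) (lsub_const l u)))] e
      = (lval l e = u)" for u by (simp add: aval_def) arith
  have 2: "cval [(0, 0, ladd (lsub_const l u) (lconst 1)), (1, snd (snd P), lsub_const l u)] e
      = (u \<le> lval l e \<and> max 1 \<bar>snd (snd P)\<bar> dvd lval l e - u)" for u by (simp add: aval_def amodulus_def)
  show ?thesis unfolding member_dnf_def dapp dmap 1 2 by blast
qed

primrec fm_dnf :: "periodic_descr \<Rightarrow> fm \<Rightarrow> atom list list" where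
  "fm_dnf P (Eq s t) = eq_dnf (ladd (tm_lin s) (lscale (-1) (tm_lin t)))"
| "fm_dnf P (Ulam t) = member_dnf P (tm_lin t)"
| "fm_dnf P (Neg \<phi>) = dneg (fm_dnf P \<phi>)"
| "fm_dnf P (And \<phi> \<psi>) = dand (fm_dnf P \<phi>) (fm_dnf P \<psi>)"
| "fm_dnf P (Ex i \<phi>) = elim_disj i (fm_dnf P \<phi>)"

definition describes :: "periodic_descr \<Rightarrow> nat set \<Rightarrow> bool" where
  "describes P U \<longleftrightarrow> (\<forall>n. n \<in> U \<longleftrightarrow> ((\<exists>u\<in>set (fst P). int n = u) \<or>
      (\<exists>u\<in>set (fst (snd P)). u \<le> int n \<and> max 1 \<bar>snd (snd P)\<bar> dvd int n - u)))"

lemma dval_fm_dnf: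
  assumes "describes P U"
  shows "dval (fm_dnf P \<phi>) (\<lambda>j. int (e j)) = sat U e \<phi>"
proof (induction \<phi> arbitrary: e)
  case (Eq s t) then show ?case by simp
next
  case (Ulam t) then show ?case using assms by (simp add: dval_member_dnf describes_def)
next
  case (Neg \<phi>) then show ?case by simp
next
  case (And \<phi> \<psi>) then show ?case by simp
next
  case (Ex i \<phi>)
  have upd: "(\<lambda>j. int ((e(i := n)) j)) = (\<lambda>j. int (e j))(i := int n)" for n by auto
  have "dval (fm_dnf P (Ex i \<phi>)) (\<lambda>j. int (e j)) =
    (\<exists>x\<ge>0. dval (fm_dnf P \<phi>) ((\<lambda>j. int (e j))(i := x)))"
    by (simp add: dval_elim_disj)
  also have "\<dots> = (\<exists>n. dval (fm_dnf P \<phi>) ((\<lambda>j. int (e j))(i := int n)))"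
    by (metis nonneg_int_cases of_nat_0_le_iff)
  also have "\<dots> = (\<exists>n. sat U (e(i := n)) \<phi>)" by (simp only: upd[symmetric] Ex.IH)
  finally show ?case by simp
qed

definition cov_table :: "('e \<Rightarrow> nat \<Rightarrow> 'r list \<Rightarrow> 'r) \<Rightarrow> 'e \<Rightarrow> nat \<Rightarrow> 'r list" where
  "cov_table H e n = foldl (\<lambda>tbl k. tbl @ [H e k tbl]) [] [0..<n]"

definition cov_rec :: "('e \<Rightarrow> nat \<Rightarrow> 'r list \<Rightarrow> 'r) \<Rightarrow> 'e \<Rightarrow> nat \<Rightarrow> 'r" where
  "cov_rec H e n = H e n (cov_table H e n)"

lemma cov_table_Suc: "cov_table H e (Suc n) = cov_table H e n @ [cov_rec H e n]"
  by (simp add: cov_table_def cov_rec_def)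

lemma length_cov_table[simp]: "length (cov_table H e n) = n"
  by (induction n) (auto simp: cov_table_Suc, simp add: cov_table_def)

lemma nth_cov_table: "k < n \<Longrightarrow> cov_table H e n ! k = cov_rec H e k"
proof (induction n)
  case (Suc n) then show ?case by (cases "k = n") (auto simp: cov_table_Suc nth_append)
qed simp

lemma nthd_cov_table: "k < n \<Longrightarrow> nthd d (cov_table H e n) k = cov_rec H e k"
  by (simp add: nthd_eq nth_cov_table)

lemma computable_cov_rec:
  fixes H :: "'e::encode \<Rightarrow> nat \<Rightarrow> 'r::encode list \<Rightarrow> 'r"
  assumes H: "computable (\<lambda>p. H (fst p) (fst (snd p)) (snd (snd p)))"
  shows "computable (\<lambda>p. cov_rec H (fst p) (snd p))"
  unfolding cov_rec_def cov_table_def by (intro computable_intros computable_comp3[OF H] computable_upt_0)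

lemma less_prod_encode_code [simp]:
  assumes "0 < k"
  shows "x < prod_encode (k, x)" "x < prod_encode (k, prod_encode (x, y))" "y < prod_encode (k, prod_encode (x, y))"
proof -
  show less: "z < prod_encode (k, z)" for z using assms triangle_ge[of "k + z"] by (simp add: prod_encode_def)
  show "x < prod_encode (k, prod_encode (x, y))" "y < prod_encode (k, prod_encode (x, y))"
    using less le_prod_encode_1 le_prod_encode_2 le_less_trans by blast+
qed

lemma computable_coeff[computable_intros]: "computable f \<Longrightarrow> computable g
  \<Longrightarrow> computable (\<lambda>x. coeff (f x) (g x))"
  unfolding coeff_def by (intro computable_intros)

lemma computable_ladd[computable_intros]:
  assumes f: "computable f" and g: "computable g"
  shows "computable (\<lambda>x. ladd (f x) (g x))"
  unfolding ladd_def by (intro computable_intros computable_upt_0 computable_comp[OF f] computable_comp[OF g])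

lemma computable_lscale[computable_intros]:
  assumes f: "computable f" and g: "computable g"
  shows "computable (\<lambda>x. lscale (f x) (g x))"
  unfolding lscale_def by (intro computable_intros computable_comp[OF f] computable_comp[OF g])

lemma computable_lconst[computable_intros]: "computable f \<Longrightarrow> computable (\<lambda>x. lconst (f x))"
  unfolding lconst_def by (intro computable_intros)

lemma computable_lvar[computable_intros]: "computable f \<Longrightarrow> computable (\<lambda>x. lvar (f x))"
  unfolding lvar_def by (intro computable_intros)

lemma computable_lzero[computable_intros]:
  assumes f: "computable f" and g: "computable g"
  shows "computable (\<lambda>x. lzero (f x) (g x))"
  unfolding lzero_def by (intro computable_intros computable_upt_0 computable_comp[OF f] computable_comp[OF g])

lemma computable_lsubst[computable_intros]: "computable f \<Longrightarrow> computable g \<Longrightarrow> computable h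
  \<Longrightarrow> computable (\<lambda>x. lsubst (f x) (g x) (h x))"
  unfolding lsubst_def by (intro computable_intros)

lemma computable_lsub_const[computable_intros]: "computable f \<Longrightarrow> computable g
  \<Longrightarrow> computable (\<lambda>x. lsub_const (f x) (g x))"
  unfolding lsub_const_def by (intro computable_intros)

lemma computable_akind[computable_intros]: "computable f \<Longrightarrow> computable (\<lambda>x. akind (f x))"
  unfolding akind_def by (intro computable_intros)

lemma computable_amod[computable_intros]: "computable f \<Longrightarrow> computable (\<lambda>x. amod (f x))"
  unfolding amod_def by (intro computable_intros)

lemma computable_aterm[computable_intros]: "computable f \<Longrightarrow> computable (\<lambda>x. aterm (f x))"
  unfolding aterm_def by (intro computable_intros)

lemma computable_amodulus[computable_intros]: "computable f \<Longrightarrow> computable (\<lambda>x. amodulus (f x))"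
  unfolding amodulus_def max_def by (intro computable_intros)

lemma computable_acoef[computable_intros]: "computable f \<Longrightarrow> computable g
  \<Longrightarrow> computable (\<lambda>x. acoef (f x) (g x))"
  unfolding acoef_def by (intro computable_intros)

lemma computable_aneg[computable_intros]: "computable f \<Longrightarrow> computable (\<lambda>x. aneg (f x))"
  unfolding aneg_def by (intro computable_intros)

lemma computable_dand[computable_intros]:
  assumes f: "computable f" and g: "computable g"
  shows "computable (\<lambda>x. dand (f x) (g x))"
  unfolding dand_def by (intro computable_intros computable_comp[OF f] computable_comp[OF g])

lemma computable_cneg[computable_intros]: "computable f \<Longrightarrow> computable (\<lambda>x. cneg (f x))"
  unfolding cneg_def by (intro computable_intros)

lemma computable_dneg[computable_intros]: "computable f \<Longrightarrow> computable (\<lambda>x. dneg (f x))"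
  unfolding dneg_def by (intro computable_intros)

lemma computable_sgn[computable_intros]: "computable f \<Longrightarrow> computable (\<lambda>x. sgn (f x :: int))"
proof -
  assume f: "computable f"
  have "computable (\<lambda>x. if f x = 0 then 0 else if 0 < f x then 1 else (-1::int))" by (intro computable_intros f)
  then show ?thesis by (rule computable_cong) (simp add: sgn_if)
qed

definition scale_atom_nat :: "nat \<Rightarrow> int \<Rightarrow> atom \<Rightarrow> atom" where
  "scale_atom_nat i L a = (if acoef i a = 0 then a else
     (akind a, int (nat L div nat \<bar>acoef i a\<bar>) * amod a,
      ladd (lzero i (lscale (int (nat L div nat \<bar>acoef i a\<bar>)) (aterm a))) (lscale (sgn (acoef i a)) (lvar i))))"

lemma scale_atom_nat_eq: "0 < L \<Longrightarrow> scale_atom_nat i L a = scale_atom i L a"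
  by (simp add: scale_atom_nat_def scale_atom_def zdiv_int)

lemma computable_scale_atom_nat[computable_intros]: "computable f \<Longrightarrow> computable g
  \<Longrightarrow> computable h \<Longrightarrow> computable (\<lambda>x. scale_atom_nat (f x) (g x) (h x))"
  unfolding scale_atom_nat_def by (intro computable_intros)

lemma computable_conj_nonneg[computable_intros]: "computable f \<Longrightarrow> computable g
  \<Longrightarrow> computable (\<lambda>x. conj_nonneg (f x) (g x))"
  unfolding conj_nonneg_def by (intro computable_intros)

lemma computable_conj_coeff_prod[computable_intros]:
  assumes f: "computable f" and g: "computable g"
  shows "computable (\<lambda>x. conj_coeff_prod (f x) (g x))"
  unfolding conj_coeff_prod_def by (intro computable_intros computable_comp[OF f] computable_comp[OF g])

lemma conj_unit_nat_eq:
  "conj_unit i C = (1, conj_coeff_prod i C, lvar i) # map (scale_atom_nat i (conj_coeff_prod i C)) (conj_nonneg i C)"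
  by (simp add: conj_unit_def scale_atom_nat_eq[OF conj_coeff_prod_pos])

lemma computable_conj_unit[computable_intros]:
  assumes f: "computable f" and g: "computable g"
  shows "computable (\<lambda>x. conj_unit (f x) (g x))"
  unfolding conj_unit_nat_eq by (intro computable_intros computable_comp[OF f] computable_comp[OF g])

lemma computable_conj_period[computable_intros]: "computable f \<Longrightarrow> computable g
  \<Longrightarrow> computable (\<lambda>x. conj_period (f x) (g x))"
  unfolding conj_period_def by (intro computable_intros)

lemma computable_conj_lower_bounds[computable_intros]:
  assumes f: "computable f" and g: "computable g"
  shows "computable (\<lambda>x. conj_lower_bounds (f x) (g x))"
  unfolding conj_lower_bounds_def by (intro computable_intros computable_comp[OF f] computable_comp[OF g])

lemma computable_elim_candidates[computable_intros]:
  assumes f: "computable f" and g: "computable g"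
  shows "computable (\<lambda>x. elim_candidates (f x) (g x))"
  unfolding elim_candidates_def by (intro computable_intros computable_comp[OF f] computable_comp[OF g])

lemma computable_asubst[computable_intros]: "computable f \<Longrightarrow> computable g \<Longrightarrow> computable h
  \<Longrightarrow> computable (\<lambda>x. asubst (f x) (g x) (h x))"
  unfolding asubst_def by (intro computable_intros)

lemma computable_elim_conj[computable_intros]:
  assumes f: "computable f" and g: "computable g"
  shows "computable (\<lambda>x. elim_conj (f x) (g x))"
  unfolding elim_conj_def by (intro computable_intros computable_comp[OF f] computable_comp[OF g])

lemma computable_elim_disj[computable_intros]:
  assumes f: "computable f" and g: "computable g"
  shows "computable (\<lambda>x. elim_disj (f x) (g x))"
  unfolding elim_disj_def by (intro computable_intros computable_comp[OF f] computable_comp[OF g])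

lemma computable_eq_dnf[computable_intros]: "computable f \<Longrightarrow> computable (\<lambda>x. eq_dnf (f x))"
  unfolding eq_dnf_def by (intro computable_intros)

lemma computable_member_dnf[computable_intros]:
  assumes f: "computable f" and g: "computable g"
  shows "computable (\<lambda>x. member_dnf (f x) (g x))"
  unfolding member_dnf_def by (intro computable_intros computable_comp[OF f] computable_comp[OF g])

definition tm_lin_step :: "nat \<Rightarrow> nat \<Rightarrow> lin list \<Rightarrow> lin" where
  "tm_lin_step e n tbl = (if fst (prod_decode n) = 0 then lvar (snd (prod_decode n))
     else if fst (prod_decode n) = 1 then lconst 0
     else if fst (prod_decode n) = 2 then lconst 1
     else ladd (nthd ([], 0) tbl (fst (prod_decode (snd (prod_decode n)))))
               (nthd ([], 0) tbl (snd (prod_decode (snd (prod_decode n))))))"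

definition tm_lin_of_code :: "nat \<Rightarrow> lin" where "tm_lin_of_code n = cov_rec tm_lin_step 0 n"

lemma tm_lin_of_code_tm_code: "tm_lin_of_code (tm_code t) = tm_lin t"
proof (induction t)
  case (Plus s t)
  then show ?case
    by (simp add: tm_lin_of_code_def cov_rec_def[of _ _ "prod_encode (3, prod_encode (tm_code s, tm_code t))"]
        tm_lin_step_def nthd_cov_table)
qed (simp_all add: tm_lin_of_code_def cov_rec_def tm_lin_step_def)

lemma computable_tm_lin_of_code[computable_intros]: "computable f \<Longrightarrow> computable (\<lambda>x. tm_lin_of_code (f x))"
proof -
  have "computable (\<lambda>p. cov_rec tm_lin_step (fst p) (snd p))"
    by (rule computable_cov_rec) (unfold tm_lin_step_def, intro computable_intros)
  then have "computable (\<lambda>n. tm_lin_of_code n)"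
    by (rule computable_cong[OF computable_comp[OF _ computable_pair[OF computable_const[of 0] computable_id]]])
      (simp add: tm_lin_of_code_def)
  then show "computable f \<Longrightarrow> computable (\<lambda>x. tm_lin_of_code (f x))" by (rule computable_comp)
qed

definition fm_dnf_step :: "periodic_descr \<Rightarrow> nat \<Rightarrow> atom list list list \<Rightarrow> atom list list" where
  "fm_dnf_step P n tbl = (if fst (prod_decode n) = 0 then
        eq_dnf (ladd (tm_lin_of_code (fst (prod_decode (snd (prod_decode n)))))
                  (lscale (-1) (tm_lin_of_code (snd (prod_decode (snd (prod_decode n)))))))
     else if fst (prod_decode n) = 1 then member_dnf P (tm_lin_of_code (snd (prod_decode n)))
     else if fst (prod_decode n) = 2 then dneg (nthd [] tbl (snd (prod_decode n)))
     else if fst (prod_decode n) = 3 then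
       dand (nthd [] tbl (fst (prod_decode (snd (prod_decode n)))))
            (nthd [] tbl (snd (prod_decode (snd (prod_decode n)))))
     else elim_disj (fst (prod_decode (snd (prod_decode n))))
            (nthd [] tbl (snd (prod_decode (snd (prod_decode n))))))"

definition fm_dnf_of_code :: "periodic_descr \<Rightarrow> nat \<Rightarrow> atom list list" where
  "fm_dnf_of_code P n = cov_rec fm_dnf_step P n"

lemma fm_dnf_of_code_fm_code: "fm_dnf_of_code P (fm_code \<phi>) = fm_dnf P \<phi>"
proof (induction \<phi>)
  case (Neg \<phi>)
  then show ?case
    by (simp add: fm_dnf_of_code_def cov_rec_def[of _ _ "prod_encode (2, fm_code \<phi>)"] fm_dnf_step_def nthd_cov_table)
next
  case (And \<phi> \<psi>)
  then show ?case
    by (simp add: fm_dnf_of_code_def cov_rec_def[of _ _ "prod_encode (3, prod_encode (fm_code \<phi>, fm_code \<psi>))"]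
        fm_dnf_step_def nthd_cov_table)
next
  case (Ex i \<phi>)
  then show ?case
    by (simp add: fm_dnf_of_code_def cov_rec_def[of _ _ "prod_encode (4, prod_encode (i, fm_code \<phi>))"]
        fm_dnf_step_def nthd_cov_table)
qed (simp_all add: fm_dnf_of_code_def cov_rec_def fm_dnf_step_def tm_lin_of_code_tm_code)

lemma computable_fm_dnf_of_code[computable_intros]: "computable f \<Longrightarrow> computable g
  \<Longrightarrow> computable (\<lambda>x. fm_dnf_of_code (f x) (g x))"
proof -
  have "computable (\<lambda>p. cov_rec fm_dnf_step (fst p) (snd p))"
    by (rule computable_cov_rec) (unfold fm_dnf_step_def, intro computable_intros)
  then have "computable (\<lambda>p. fm_dnf_of_code (fst p) (snd p))"
    by (rule computable_cong) (simp add: fm_dnf_of_code_def)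
  then show "computable f \<Longrightarrow> computable g \<Longrightarrow> computable
    (\<lambda>x. fm_dnf_of_code (f x) (g x))" by (rule computable_comp2)
qed

definition lval_tuple :: "lin \<Rightarrow> nat list \<Rightarrow> int" where
  "lval_tuple l xs = foldl (\<lambda>acc i. acc + coeff (fst l) i * int (nthd 0 xs i)) (snd l) [0..<length (fst l)]"

lemma foldl_sum_upt: "foldl (\<lambda>acc i. acc + f i) a [0..<n] = a + (\<Sum>i<n. f i)"
  for f :: "nat \<Rightarrow> int"
  by (induction n arbitrary: a) auto

lemma tuple_env_nthd: "tuple_env xs i = nthd 0 xs i"
  by (simp add: tuple_env_def nthd_eq)

lemma lval_tuple_eq: "lval_tuple l xs = lval l (\<lambda>j. int (tuple_env xs j))"
  by (simp add: lval_tuple_def lval_def foldl_sum_upt tuple_env_nthd)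

definition aval_tuple :: "atom \<Rightarrow> nat list \<Rightarrow> bool" where
  "aval_tuple a xs = (if akind a = 0 then 0 < lval_tuple (aterm a) xs
               else if akind a = 1 then amodulus a dvd lval_tuple (aterm a) xs
               else \<not> amodulus a dvd lval_tuple (aterm a) xs)"

definition dval_tuple :: "atom list list \<Rightarrow> nat list \<Rightarrow> bool" where
  "dval_tuple D xs = (\<exists>C\<in>set D. \<forall>a\<in>set C. aval_tuple a xs)"

lemma dval_tuple_eq: "dval_tuple D xs = dval D (\<lambda>j. int (tuple_env xs j))"
  by (simp add: dval_tuple_def dval_def cval_def aval_tuple_def aval_def lval_tuple_eq)

lemma computable_lval_tuple[computable_intros]:
  assumes f: "computable f" and g: "computable g"
  shows "computable (\<lambda>x. lval_tuple (f x) (g x))"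
  unfolding lval_tuple_def by (intro computable_intros computable_upt_0 computable_comp[OF f] computable_comp[OF g])

lemma computable_aval_tuple[computable_intros]: "computable f \<Longrightarrow> computable g
  \<Longrightarrow> computable (\<lambda>x. aval_tuple (f x) (g x))"
  unfolding aval_tuple_def by (intro computable_intros)

lemma computable_dval_tuple[computable_intros]:
  assumes f: "computable f" and g: "computable g"
  shows "computable (\<lambda>x. dval_tuple (f x) (g x))"
  unfolding dval_tuple_def by (intro computable_intros computable_comp[OF f] computable_comp[OF g])

theorem dval_tuple_fm_dnf_of_code:
  assumes "describes P U"
  shows "dval_tuple (fm_dnf_of_code P (fm_code \<phi>)) xs = sat U (tuple_env xs) \<phi>"
  using dval_fm_dnf[OF assms, of \<phi> "tuple_env xs"] by (simp add: fm_dnf_of_code_fm_code dval_tuple_eq)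

section \<open>Ulam sequences\<close>

definition ulam_next :: "nat list \<Rightarrow> nat" where
  "ulam_next us = (LEAST n. n > last us \<and> card {(i, j). i < j \<and> j < length us \<and> us ! i + us ! j = n} = 1)"

lemma ulam_prefix_step:
  "ulam_prefix a b (Suc (Suc (Suc k))) = ulam_prefix a b (Suc (Suc k)) @ [ulam_next (ulam_prefix a b (Suc (Suc k)))]"
  by (simp add: Let_def ulam_next_def)

lemma length_ulam_prefix[simp]: "length (ulam_prefix a b k) = k"
  by (induction a b k rule: ulam_prefix.induct) (simp_all add: Let_def)

lemma ulam_prefix_Suc_snoc: "\<exists>x. ulam_prefix a b (Suc k) = ulam_prefix a b k @ [x]"
  by (cases "(a, b, Suc k)" rule: ulam_prefix.cases) (auto simp: Let_def)

lemma nth_ulam_prefix: "i < k \<Longrightarrow> ulam_prefix a b k ! i = ulam a b i"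
proof (induction k)
  case (Suc k)
  obtain x where x: "ulam_prefix a b (Suc k) = ulam_prefix a b k @ [x]" using ulam_prefix_Suc_snoc by blast
  show ?case
  proof (cases "i < k")
    case True then show ?thesis using Suc x by (simp add: nth_append)
  next
    case False
    then have "i = k" using Suc.prems by simp
    then show ?thesis by (simp add: ulam_def)
  qed
qed simp

lemma sorted_wrt_less_le_last: "sorted_wrt (<) xs \<Longrightarrow> y \<in> set xs
  \<Longrightarrow> y \<le> last (xs :: nat list)"
  by (induction xs) (auto simp: order.strict_implies_order)

lemma card_sum_last_two:
  fixes us :: "nat list"
  assumes s: "sorted_wrt (<) us" and l: "2 \<le> length us"
  shows "card {(i, j). i < j \<and> j < length us \<and> us ! i + us ! j = us ! (length us - 2) + us ! (length us - 1)} = 1"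
proof -
  define n where "n = length us"
  have less_iff: "us ! i < us ! j \<longleftrightarrow> i < j" if "i < n" "j < n" for i j
    using sorted_wrt_nth_less[OF s] that unfolding n_def by (metis linorder_neqE_nat order_less_asym)
  have "{(i, j). i < j \<and> j < n \<and> us ! i + us ! j = us ! (n - 2) + us ! (n - 1)} = {(n - 2, n - 1)}"
  proof safe
    fix i j assume ij: "i < j" "j < n" "us ! i + us ! j = us ! (n - 2) + us ! (n - 1)"
    have "\<not> j < n - 1"
      using ij less_iff[of i j] less_iff[of j "n - 1"] less_iff[of j "n - 2"] less_iff[of "n - 2" j] l
      unfolding n_def by linarith
    then show "j = n - 1" using ij by linarith
    then have "us ! i = us ! (n - 2)" using ij by simp
    moreover have "i < n" "n - 2 < n" using ij l unfolding n_def by linarith+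
    ultimately show "i = n - 2" using less_iff[of i "n - 2"] less_iff[of "n - 2" i] by auto
  qed (use l n_def in auto)
  then show ?thesis unfolding n_def by simp
qed

text \<open>The sum of the two largest terms has exactly one representation, so it bounds the next
  term. This keeps the search in ulam_next_search finite.\<close>

lemma ulam_next_props:
  fixes us :: "nat list"
  assumes s: "sorted_wrt (<) us" and l: "2 \<le> length us" and pos: "\<forall>x\<in>set us. 0 < x"
  shows "last us < ulam_next us" "card {(i, j). i < j \<and> j < length us \<and> us ! i + us ! j = ulam_next us} = 1"
    "ulam_next us \<le> us ! (length us - 2) + us ! (length us - 1)"
proof -
  define w where "w = us ! (length us - 2) + us ! (length us - 1)"
  have "us \<noteq> []" using l by auto
  then have "last us = us ! (length us - 1)" by (simp add: last_conv_nth)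
  moreover have "0 < us ! (length us - 2)" using pos l by auto
  ultimately have "last us < w" unfolding w_def by simp
  then have P: "w > last us \<and> card {(i, j). i < j \<and> j < length us \<and> us ! i + us ! j = w} = 1"
    using card_sum_last_two[OF s l] unfolding w_def by simp
  show "last us < ulam_next us" "card {(i, j). i < j \<and> j < length us \<and> us ! i + us ! j = ulam_next us} = 1"
    using LeastI[of "\<lambda>n. n > last us \<and> card {(i, j). i < j \<and> j < length us
      \<and> us ! i + us ! j = n} = 1", OF P]
    unfolding ulam_next_def by auto
  show "ulam_next us \<le> us ! (length us - 2) + us ! (length us - 1)"
    using Least_le[of "\<lambda>n. n > last us \<and> card {(i, j). i < j \<and> j < length us
      \<and> us ! i + us ! j = n} = 1", OF P]
    unfolding ulam_next_def w_def by simp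
qed

lemma sorted_ulam_prefix:
  assumes "0 < a" "a < b"
  shows "sorted_wrt (<) (ulam_prefix a b k) \<and> (\<forall>x\<in>set (ulam_prefix a b k). 0 < x)"
  using assms
proof (induction a b k rule: ulam_prefix.induct)
  case (4 a b k)
  define us where "us = ulam_prefix a b (Suc (Suc k))"
  have IH: "sorted_wrt (<) us \<and> (\<forall>x\<in>set us. 0 < x)" using 4 unfolding us_def by simp
  have next_gt: "last us < ulam_next us" using ulam_next_props(1)[of us] IH by (simp add: us_def)
  then have "\<forall>y\<in>set us. y < ulam_next us" using sorted_wrt_less_le_last[of us] IH by fastforce
  then show ?case unfolding ulam_prefix_step us_def[symmetric] using IH next_gt
    by (auto simp: sorted_wrt_append)
qed simp_all

lemma strict_mono_ulam:
  assumes "0 < a" "a < b"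
  shows "strict_mono (ulam a b)"
proof (rule strict_mono_Suc_iff[THEN iffD2], intro allI)
  fix k
  have "sorted_wrt (<) (ulam_prefix a b (Suc (Suc k)))" using sorted_ulam_prefix[OF assms] by blast
  then have "ulam_prefix a b (Suc (Suc k)) ! k < ulam_prefix a b (Suc (Suc k)) ! Suc k"
    by (rule sorted_wrt_nth_less) auto
  then show "ulam a b k < ulam a b (Suc k)" by (simp add: nth_ulam_prefix)
qed

lemma card_ulam_set_atLeast0AtMost:
  assumes "0 < a" "a < b"
  shows "card (ulam_set a b \<inter> {0..n}) = card {k. ulam a b k \<le> n}"
proof -
  have "ulam_set a b \<inter> {0..n} = ulam a b ` {k. ulam a b k \<le> n}" unfolding ulam_set_def by auto
  moreover have "inj_on (ulam a b) {k. ulam a b k \<le> n}"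
    by (rule strict_mono_imp_inj_on[OF strict_mono_ulam[OF assms]])
  ultimately show ?thesis by (simp add: card_image)
qed

definition index_pairs :: "nat \<Rightarrow> (nat \<times> nat) list" where
  "index_pairs m = concat (map (\<lambda>j. map (\<lambda>i. (i, j)) [0..<j]) [0..<m])"

lemma set_index_pairs: "set (index_pairs m) = {(i, j). i < j \<and> j < m}"
  by (auto simp: index_pairs_def)

lemma distinct_index_pairs: "distinct (index_pairs m)"
  unfolding index_pairs_def by (induction m) (auto simp: distinct_map inj_on_def)

definition sum_reps :: "nat list \<Rightarrow> nat \<Rightarrow> nat" where
  "sum_reps us n = length (filter (\<lambda>p. nthd 0 us (fst p) + nthd 0 us (snd p) = n) (index_pairs (length us)))"

lemma sum_reps_eq_card: "sum_reps us n = card {(i, j). i < j \<and> j < length us \<and> us ! i + us ! j = n}"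
proof -
  have "{(i, j). i < j \<and> j < length us \<and> us ! i + us ! j = n} =
      set (filter (\<lambda>p. nthd 0 us (fst p) + nthd 0 us (snd p) = n) (index_pairs (length us)))"
    by (auto simp: set_index_pairs nthd_eq)
  moreover have "distinct (filter (\<lambda>p. nthd 0 us (fst p) + nthd 0 us (snd p) = n) (index_pairs (length us)))"
    by (simp add: distinct_index_pairs)
  ultimately show ?thesis unfolding sum_reps_def by (simp only: distinct_card)
qed

lemma filter_upt_least:
  assumes "lo \<le> w" "w < hi" "Q w"
  shows "nthd 0 (filter Q [lo..<hi]) 0 = (LEAST n. lo \<le> n \<and> Q n)"
proof -
  define m where "m = (LEAST n. lo \<le> n \<and> Q n)"
  have m: "lo \<le> m" "Q m" using LeastI[of "\<lambda>n. lo \<le> n \<and> Q n" w] assms unfolding m_def by auto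
  have mw: "m \<le> w" using Least_le[of "\<lambda>n. lo \<le> n \<and> Q n" w] assms unfolding m_def by auto
  have below: "\<not> Q n" if "lo \<le> n" "n < m" for n
    using not_less_Least[of n "\<lambda>n. lo \<le> n \<and> Q n"] that unfolding m_def by auto
  have "[lo..<hi] = [lo..<m] @ [m..<hi]"
    using upt_add_eq_append[of lo m "hi - m"] m mw assms by simp
  moreover have "[m..<hi] = m # [Suc m..<hi]" using mw assms by (simp add: upt_conv_Cons)
  moreover have "filter Q [lo..<m] = []" using below by (auto simp: filter_empty_conv)
  ultimately have "filter Q [lo..<hi] = m # filter Q [Suc m..<hi]" using m by simp
  then show ?thesis by (simp add: nthd_eq m_def)
qed

definition ulam_next_search :: "nat list \<Rightarrow> nat" where
  "ulam_next_search us = nthd 0 (filter (\<lambda>n. sum_reps us n = 1)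
      [Suc (nthd 0 us (length us - 1))..<nthd 0 us (length us - 2) + nthd 0 us (length us - 1) + 1]) 0"

lemma ulam_next_search_eq:
  fixes us :: "nat list"
  assumes s: "sorted_wrt (<) us" and l: "2 \<le> length us" and pos: "\<forall>x\<in>set us. 0 < x"
  shows "ulam_next_search us = ulam_next us"
proof -
  have "us \<noteq> []" using l by auto
  then have last: "nthd 0 us (length us - 1) = last us" by (simp add: nthd_eq last_conv_nth)
  have "nthd 0 us (length us - 2) = us ! (length us - 2)" "nthd 0 us (length us - 1) = us ! (length us - 1)"
    using l by (auto simp: nthd_eq)
  then have "ulam_next_search us = (LEAST n. Suc (last us) \<le> n \<and> sum_reps us n = 1)"
    unfolding ulam_next_search_def last
    using ulam_next_props[OF s l pos] last by (intro filter_upt_least) (auto simp: sum_reps_eq_card)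
  also have "\<dots> = ulam_next us" unfolding ulam_next_def by (simp add: sum_reps_eq_card Suc_le_eq)
  finally show ?thesis .
qed

definition ulam_step :: "nat list \<Rightarrow> nat list" where "ulam_step us = us @ [ulam_next_search us]"

definition ulam_list :: "nat \<Rightarrow> nat \<Rightarrow> nat \<Rightarrow> nat list" where
  "ulam_list a b k = (ulam_step ^^ k) [a, b]"

lemma ulam_list_eq_prefix:
  assumes "0 < a" "a < b"
  shows "ulam_list a b k = ulam_prefix a b (Suc (Suc k))"
proof (induction k)
  case 0 then show ?case by (simp add: ulam_list_def)
next
  case (Suc k)
  have "ulam_list a b (Suc k) = ulam_step (ulam_prefix a b (Suc (Suc k)))" using Suc by (simp add: ulam_list_def)
  also have "\<dots> = ulam_prefix a b (Suc (Suc (Suc k)))"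
    using sorted_ulam_prefix[OF assms] ulam_next_search_eq ulam_prefix_step[symmetric]
    by (simp add: ulam_step_def del: ulam_prefix.simps)
  finally show ?case .
qed

lemma nthd_ulam_list: "0 < a \<Longrightarrow> a < b \<Longrightarrow> k < K + 2
  \<Longrightarrow> nthd 0 (ulam_list a b K) k = ulam a b k"
  by (simp add: ulam_list_eq_prefix nthd_eq nth_ulam_prefix)

lemma computable_index_pairs[computable_intros]: "computable f \<Longrightarrow> computable (\<lambda>x. index_pairs (f x))"
  unfolding index_pairs_def by (intro computable_intros computable_upt_0)

lemma computable_sum_reps[computable_intros]:
  assumes "computable f" "computable g"
  shows "computable (\<lambda>x. sum_reps (f x) (g x))"
  unfolding sum_reps_def by (intro computable_intros computable_comp[OF assms(1)] computable_comp[OF assms(2)])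

lemma computable_ulam_next_search[computable_intros]:
  assumes "computable f"
  shows "computable (\<lambda>x. ulam_next_search (f x))"
  unfolding ulam_next_search_def by (intro computable_intros computable_comp[OF assms])

lemma computable_ulam_step[computable_intros]: "computable f \<Longrightarrow> computable (\<lambda>x. ulam_step (f x))"
  unfolding ulam_step_def by (intro computable_intros)

lemma computable_ulam_list[computable_intros]:
  "computable f \<Longrightarrow> computable g \<Longrightarrow> computable h
    \<Longrightarrow> computable (\<lambda>x. ulam_list (f x) (g x) (h x))"
  unfolding ulam_list_def by (intro computable_intros)

section \<open>Eventually periodic Ulam sequences\<close>

definition ulam_period_increase :: "nat \<Rightarrow> nat \<Rightarrow> nat \<Rightarrow> nat \<Rightarrow> nat" where
  "ulam_period_increase a b N p = ulam a b (N + p) - ulam a b N"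

definition ulam_descr :: "nat \<Rightarrow> nat \<Rightarrow> nat \<Rightarrow> nat \<Rightarrow> periodic_descr" where
  "ulam_descr a b N p = (map (\<lambda>k. int (nthd 0 (ulam_list a b (N + p)) k)) [0..<N],
     map (\<lambda>k. int (nthd 0 (ulam_list a b (N + p)) k)) [N..<N + p],
     int (nthd 0 (ulam_list a b (N + p)) (N + p)) - int (nthd 0 (ulam_list a b (N + p)) N))"

lemma computable_ulam_descr[computable_intros]:
  assumes f: "computable f" and g: "computable g" and h: "computable h" and k: "computable k"
  shows "computable (\<lambda>x. ulam_descr (f x) (g x) (h x) (k x))"
  unfolding ulam_descr_def
  by (intro computable_intros computable_upt_0 computable_comp[OF f] computable_comp[OF g] computable_comp[OF h]
    computable_comp[OF k])

lemma of_nat_div_ge_minus_1: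
  assumes "0 < d"
  shows "real x / real d - 1 \<le> real (x div d)"
proof -
  have "real (x mod d) / real d < 1" using assms by simp
  then show ?thesis using of_nat_of_nat_div_aux[of x d, where 'a = real] by linarith
qed

lemma tendsto_div_of_nat_linear_bounds:
  fixes f :: "nat \<Rightarrow> real"
  assumes lower: "\<And>n. \<alpha> * real n - C1 \<le> f n" and upper: "\<And>n. f n \<le> \<alpha> * real n + C2"
  shows "(\<lambda>n. f n / real n) \<longlonglongrightarrow> \<alpha>"
proof (rule real_tendsto_sandwich)
  show "\<forall>\<^sub>F n in sequentially. \<alpha> - C1 / real n \<le> f n / real n"
  proof (rule eventually_sequentiallyI[of 1])
    fix n :: nat assume "1 \<le> n"
    then have "\<alpha> - C1 / real n = (\<alpha> * real n - C1) / real n" by (simp add: field_simps)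
    also have "\<dots> \<le> f n / real n" using lower by (rule divide_right_mono) simp
    finally show "\<alpha> - C1 / real n \<le> f n / real n" .
  qed
  show "\<forall>\<^sub>F n in sequentially. f n / real n \<le> \<alpha> + C2 / real n"
  proof (rule eventually_sequentiallyI[of 1])
    fix n :: nat assume "1 \<le> n"
    have "f n / real n \<le> (\<alpha> * real n + C2) / real n" using upper by (rule divide_right_mono) simp
    also have "\<dots> = \<alpha> + C2 / real n" using \<open>1 \<le> n\<close> by (simp add: field_simps)
    finally show "f n / real n \<le> \<alpha> + C2 / real n" .
  qed
  show "(\<lambda>n. \<alpha> - C1 / real n) \<longlonglongrightarrow> \<alpha>"
    "(\<lambda>n. \<alpha> + C2 / real n) \<longlonglongrightarrow> \<alpha>"
    by (auto intro!: tendsto_eq_intros lim_const_over_n)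
qed

locale ulam_periodic =
  fixes a b N p :: nat
  assumes pos: "0 < a" and less: "a < b" and witness: "periodic_witness a b N p"
begin

lemma period_ge_1: "1 \<le> p"
  using witness unfolding periodic_witness_def by simp

lemma ulam_strict_mono: "strict_mono (ulam a b)"
  by (rule strict_mono_ulam[OF pos less])

lemma period_increase_pos: "0 < ulam_period_increase a b N p"
  using ulam_strict_mono period_ge_1 unfolding ulam_period_increase_def strict_mono_def by simp

lemma ulam_add_period:
  assumes "N \<le> k"
  shows "ulam a b (k + p) = ulam a b k + ulam_period_increase a b N p"
proof -
  define D where "D j = ulam a b (j + p) - ulam a b j" for j
  have le: "ulam a b j \<le> ulam a b (j + p)" for j
    using ulam_strict_mono by (simp add: strict_mono_less_eq)
  have gap: "ulam a b (Suc j) = ulam a b j + ulam_gap a b j" for j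
    using ulam_strict_mono[THEN strict_monoD, of j "Suc j"] unfolding ulam_gap_def by simp
  have shift: "D (Suc j) = D j" if "N \<le> j" for j
    using gap[of j] gap[of "j + p"] le[of j] witness that unfolding D_def periodic_witness_def by simp
  have "D k = D N" using assms by (induction k rule: dec_induct) (simp_all add: shift)
  then show ?thesis using le[of k] unfolding D_def ulam_period_increase_def by simp
qed

lemma ulam_add_mult_period:
  assumes "N \<le> k"
  shows "ulam a b (k + m * p) = ulam a b k + m * ulam_period_increase a b N p"
proof (induction m)
  case (Suc m)
  have "ulam a b (k + Suc m * p) = ulam a b ((k + m * p) + p)" by (simp add: algebra_simps)
  also have "\<dots> = ulam a b (k + m * p) + ulam_period_increase a b N p"
    using assms by (intro ulam_add_period) simp
  finally show ?case using Suc by simp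
qed simp

lemma ulam_offset_decomp:
  "ulam a b (N + j) = ulam a b (N + j mod p) + (j div p) * ulam_period_increase a b N p"
  using ulam_add_mult_period[of "N + j mod p" "j div p"] by (simp add: add.assoc)

lemma ulam_residue_bounds:
  assumes "r < p"
  shows "ulam a b N \<le> ulam a b (N + r)" "ulam a b (N + r) < ulam a b N + ulam_period_increase a b N p"
  using ulam_strict_mono assms period_increase_pos
  by (auto simp: strict_mono_less_eq strict_mono_less ulam_period_increase_def)

lemma mem_ulam_set_iff:
  "n \<in> ulam_set a b \<longleftrightarrow> (\<exists>k<N. n = ulam a b k) \<or>
      (\<exists>k\<in>{N..<N + p}. ulam a b k \<le> n \<and> ulam_period_increase a b N p dvd n - ulam a b k)"
  (is "_ \<longleftrightarrow> ?finite \<or> ?periodic")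
proof
  assume "n \<in> ulam_set a b"
  then obtain K where K: "n = ulam a b K" unfolding ulam_set_def by blast
  show "?finite \<or> ?periodic"
  proof (cases "K < N")
    case False
    then have "n = ulam a b (N + (K - N) mod p) + ((K - N) div p) * ulam_period_increase a b N p"
      using ulam_offset_decomp[of "K - N"] K by simp
    then show ?thesis using period_ge_1 by (intro disjI2 bexI[of _ "N + (K - N) mod p"]) auto
  qed (use K in blast)
next
  assume "?finite \<or> ?periodic"
  then show "n \<in> ulam_set a b"
  proof (elim disjE bexE exE conjE)
    fix k assume k: "k \<in> {N..<N + p}" "ulam a b k \<le> n" "ulam_period_increase a b N p dvd n - ulam a b k"
    then obtain m where "n - ulam a b k = ulam_period_increase a b N p * m" by blast
    then have "n = ulam a b (k + m * p)" using k ulam_add_mult_period[of k m] by (simp add: mult.commute)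
    then show ?thesis unfolding ulam_set_def by blast
  qed (auto simp: ulam_set_def)
qed

lemma ulam_descr_eq:
  "ulam_descr a b N p = (map (\<lambda>k. int (ulam a b k)) [0..<N], map (\<lambda>k. int (ulam a b k)) [N..<N + p],
     int (ulam_period_increase a b N p))"
proof -
  have nth: "nthd 0 (ulam_list a b (N + p)) k = ulam a b k" if "k \<le> N + p" for k
    using nthd_ulam_list[OF pos less] that by simp
  have "ulam a b N \<le> ulam a b (N + p)" using ulam_strict_mono by (simp add: strict_mono_less_eq)
  then show ?thesis unfolding ulam_descr_def ulam_period_increase_def by (simp add: nth of_nat_diff)
qed

lemma describes_ulam_descr: "describes (ulam_descr a b N p) (ulam_set a b)"
proof -
  define G where "G = ulam_period_increase a b N p"
  have dvd_iff: "m \<le> n \<and> G dvd n - m \<longleftrightarrow> int m \<le> int n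
    \<and> max 1 \<bar>int G\<bar> dvd int n - int m" for m n
  proof (cases "m \<le> n")
    case True
    then have diff: "int n - int m = int (n - m)" by simp
    have max: "max 1 \<bar>int G\<bar> = int G" using period_increase_pos unfolding G_def by simp
    show ?thesis using True by (simp only: diff max int_dvd_int_iff of_nat_le_iff simp_thms)
  qed simp
  have "n \<in> ulam_set a b
    \<longleftrightarrow> (\<exists>u\<in>set (map (\<lambda>k. int (ulam a b k)) [0..<N]). int n = u) \<or>
      (\<exists>u\<in>set (map (\<lambda>k. int (ulam a b k)) [N..<N + p]). u \<le> int n \<and> max 1 \<bar>int G\<bar> dvd
        int n - u)" for n
  proof -
    have fin: "(\<exists>k<N. n = ulam a b k) \<longleftrightarrow>
      (\<exists>u\<in>set (map (\<lambda>k. int (ulam a b k)) [0..<N]). int n = u)"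
      by auto
    have per: "(\<exists>k\<in>{N..<N + p}. ulam a b k \<le> n \<and> G dvd n - ulam a b k) \<longleftrightarrow>
        (\<exists>u\<in>set (map (\<lambda>k. int (ulam a b k)) [N..<N + p]). u \<le> int n \<and> max 1 \<bar>int G\<bar>
          dvd int n - u)"
      unfolding dvd_iff by auto
    show ?thesis by (simp only: mem_ulam_set_iff G_def[symmetric] fin per)
  qed
  then show ?thesis unfolding describes_def ulam_descr_eq fst_conv snd_conv G_def[symmetric] by (rule allI)
qed

lemma dval_tuple_ulam_descr:
  "dval_tuple (fm_dnf_of_code (ulam_descr a b N p) (fm_code \<phi>)) xs = sat (ulam_set a b) (tuple_env xs) \<phi>"
  by (rule dval_tuple_fm_dnf_of_code[OF describes_ulam_descr])

lemma card_ulam_atMost_upper: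
  "card {k. ulam a b k \<le> n} \<le> N + p * (n div ulam_period_increase a b N p + 1)"
proof -
  define G where "G = ulam_period_increase a b N p"
  have "k < N + p * (n div G + 1)" if "ulam a b k \<le> n" for k
  proof (cases "k < N")
    case False
    define j where "j = k - N"
    have "ulam a b N + (j div p) * G \<le> ulam a b k"
      using ulam_offset_decomp[of j] ulam_residue_bounds(1)[of "j mod p"] period_ge_1 False
      unfolding j_def G_def by simp
    then have "j div p \<le> n div G"
      using that period_increase_pos by (simp add: G_def less_eq_div_iff_mult_less_eq)
    have "j < p * (j div p + 1)" using dividend_less_times_div[of p j] period_ge_1 by simp
    also have "\<dots> \<le> p * (n div G + 1)" using \<open>j div p \<le> n div G\<close> by simp
    finally show ?thesis unfolding j_def by simp
  qed simp
  then have "{k. ulam a b k \<le> n} \<subseteq> {..<N + p * (n div G + 1)}" by auto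
  then show ?thesis unfolding G_def[symmetric] by (metis card_lessThan card_mono finite_lessThan)
qed

lemma card_ulam_atMost_lower:
  "p * ((n - ulam a b N) div ulam_period_increase a b N p) \<le> card {k. ulam a b k \<le> n}"
proof -
  define G where "G = ulam_period_increase a b N p"
  define q where "q = (n - ulam a b N) div G"
  have "ulam a b (N + j) \<le> n" if "j < p * q" for j
  proof -
    have "j div p < q" using that period_ge_1 by (simp add: div_less_iff_less_mult mult.commute)
    then have "(j div p + 1) * G \<le> q * G" by (intro mult_le_mono1) simp
    also have "\<dots> \<le> n - ulam a b N" unfolding q_def by (rule div_times_less_eq_dividend)
    finally have "(j div p + 1) * G \<le> n - ulam a b N" .
    moreover have "ulam a b (N + j) < ulam a b N + (j div p + 1) * G"
      using ulam_offset_decomp[of j] ulam_residue_bounds(2)[of "j mod p"] period_ge_1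
      unfolding G_def by simp
    moreover have "0 < (j div p + 1) * G" using period_increase_pos unfolding G_def by simp
    ultimately show ?thesis by linarith
  qed
  then have "(\<lambda>j. N + j) ` {..<p * q} \<subseteq> {k. ulam a b k \<le> n}" by auto
  moreover have "finite {k. ulam a b k \<le> n}"
    using ulam_strict_mono by (metis finite_less_ub strict_mono_imp_increasing)
  ultimately have "card ((\<lambda>j. N + j) ` {..<p * q}) \<le> card {k. ulam a b k \<le> n}" by (rule card_mono[rotated])
  then show ?thesis unfolding q_def G_def by (simp add: card_image)
qed

lemma ulam_density: "(\<lambda>n. real (card (ulam_set a b \<inter> {0..n})) / real n)
    \<longlonglongrightarrow> real p / real (ulam_period_increase a b N p)"
proof -
  define G where "G = ulam_period_increase a b N p"
  define A where "A = ulam a b N"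
  have G: "0 < G" using period_increase_pos unfolding G_def .
  have count: "card (ulam_set a b \<inter> {0..n}) = card {k. ulam a b k \<le> n}" for n
    by (rule card_ulam_set_atLeast0AtMost[OF pos less])
  have lower: "real p / real G * real n - real p * (real A / real G + 1)
      \<le> real (card (ulam_set a b \<inter> {0..n}))" for n
  proof -
    have "real p / real G * real n - real p * (real A / real G + 1) = real p * ((real n - real A) / real G - 1)"
      using G by (simp add: field_simps)
    also have "\<dots> \<le> real p * real ((n - A) div G)"
    proof (intro mult_left_mono)
      have "(real n - real A) / real G \<le> real (n - A) / real G" using G by (intro divide_right_mono) auto
      then show "(real n - real A) / real G - 1 \<le> real ((n - A) div G)"
        using of_nat_div_ge_minus_1[OF G, of "n - A"] by linarith
    qed simp
    also have "\<dots> = real (p * ((n - A) div G))" by simp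
    also have "\<dots> \<le> real (card (ulam_set a b \<inter> {0..n}))"
      using card_ulam_atMost_lower[of n] unfolding count A_def G_def by (simp only: of_nat_le_iff)
    finally show ?thesis .
  qed
  have upper: "real (card (ulam_set a b \<inter> {0..n})) \<le> real p / real G * real n + (real N + real p)" for n
  proof -
    have "real (card (ulam_set a b \<inter> {0..n})) \<le> real (N + p * (n div G + 1))"
      using card_ulam_atMost_upper[of n] unfolding count G_def by (simp only: of_nat_le_iff)
    also have "\<dots> = real N + real p * (real (n div G) + 1)" by (simp add: algebra_simps)
    also have "\<dots> \<le> real N + real p * (real n / real G + 1)"
      using of_nat_div_le_of_nat[of n G] by (intro add_left_mono mult_left_mono) auto
    finally show ?thesis by (simp add: algebra_simps)
  qed
  show ?thesis using tendsto_div_of_nat_linear_bounds[OF lower upper] unfolding G_def .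
qed

end

section \<open>Recursive functions from the periodicity witnesses\<close>

lemma computable_nat_eval: "computable (F :: 'a::encode \<Rightarrow> nat)
  \<Longrightarrow> \<exists>r. \<forall>x. eval r [enc x] (F x)"
  unfolding computable_def recursive1_def by (metis enc_nat)

lemma enc_nat_list: "enc (xs :: nat list) = list_encode xs"
  by (simp add: enc_list_def enc_nat_def[abs_def])

lemma eval_list_encode_drop:
  assumes "j \<le> k"
  shows "\<exists>R. \<forall>xs. length xs = k \<longrightarrow> eval R xs (list_encode (drop j xs))"
  using assms
proof (induction "k - j" arbitrary: j)
  case 0
  then show ?case by (intro exI[of _ Z]) (auto intro: eval_Z)
next
  case (Suc d)
  then obtain R where R: "\<forall>xs. length xs = k \<longrightarrow> eval R xs (list_encode (drop (Suc j) xs))"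
    by (metis Suc_diff_Suc Suc_leI diff_is_0_eq' nat.inject nat.simps(3) not_le)
  obtain r where r: "\<And>m n. eval r [m, n] (prod_encode (m, n))"
    using recursive2_prod_encode unfolding recursive2_def by blast
  have "eval (Cn S [Cn r [Proj j, R]]) xs (list_encode (drop j xs))" if "length xs = k" for xs
  proof -
    have "j < length xs" using Suc.hyps that by linarith
    then have "list_encode (drop j xs) = Suc (prod_encode (xs ! j, list_encode (drop (Suc j) xs)))"
      by (simp add: Cons_nth_drop_Suc[symmetric])
    then show ?thesis using R that \<open>j < length xs\<close>
      by (auto intro!: eval_Cn1 eval_Cn2[OF _ _ r] eval_Proj_nth eval_S)
  qed
  then show ?case by blast
qed

lemma recursive_with_witnesses:
  fixes F :: "nat \<Rightarrow> nat \<Rightarrow> nat \<Rightarrow> nat \<Rightarrow> nat list \<Rightarrow> nat"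
  assumes "computable (\<lambda>q. F (fst q) (fst (snd q)) (fst (snd (snd q))) (fst (snd (snd (snd q))))
      (snd (snd (snd (snd q)))))"
  shows "\<exists>R. \<forall>a b N p zs. length zs = k \<longrightarrow> eval wN [a, b] N \<longrightarrow> eval wp [a, b] p \<longrightarrow>
      eval R (a # b # zs) (F a b N p zs)"
proof -
  obtain rF where rF: "\<And>q. eval rF [enc q] (F (fst q) (fst (snd q)) (fst (snd (snd q)))
      (fst (snd (snd (snd q)))) (snd (snd (snd (snd q)))))"
    using computable_nat_eval[OF assms] by blast
  obtain r where r: "\<And>m n. eval r [m, n] (prod_encode (m, n))"
    using recursive2_prod_encode unfolding recursive2_def by blast
  obtain L where L: "\<forall>xs. length xs = k + 2 \<longrightarrow> eval L xs (list_encode (drop 2 xs))"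
    using eval_list_encode_drop[of 2 "k + 2"] by auto
  have arg: "eval (Cn w [Proj 0, Proj 1]) (a # b # zs) y" if "eval w [a, b] y" for w a b zs y
    by (rule eval_Cn2[OF _ _ that]) (auto intro: eval_Proj_nth)
  define R where "R = Cn rF [Cn r [Proj 0, Cn r [Proj 1, Cn r [Cn wN [Proj 0, Proj 1],
      Cn r [Cn wp [Proj 0, Proj 1], L]]]]]"
  have "eval R (a # b # zs) (F a b N p zs)"
    if "length zs = k" "eval wN [a, b] N" "eval wp [a, b] p" for a b N p zs
  proof -
    have args: "eval (Cn wN [Proj 0, Proj 1]) (a # b # zs) N" "eval (Cn wp [Proj 0, Proj 1]) (a # b # zs) p"
      using arg that(2,3) by blast+
    have "eval L (a # b # zs) (list_encode (drop 2 (a # b # zs)))" using L that(1) by (simp del: drop_Cons_numeral)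
    then have "eval (Cn r [Proj 0, Cn r [Proj 1, Cn r [Cn wN [Proj 0, Proj 1], Cn r [Cn wp [Proj 0, Proj 1], L]]]])
        (a # b # zs) (enc (a, b, N, p, zs))"
      unfolding enc_pair enc_nat enc_nat_list by (intro eval_Cn2[OF _ _ r] eval_Proj_nth args) simp_all
    then show ?thesis unfolding R_def using rF[of "(a, b, N, p, zs)"] by (auto intro: eval_Cn1)
  qed
  then show ?thesis by blast
qed

text \<open>A missing tuple code reads as 0, the code of the empty tuple; this serves part (ii).\<close>

definition ulam_decision :: "nat \<Rightarrow> nat \<Rightarrow> nat \<Rightarrow> nat \<Rightarrow> nat list \<Rightarrow> nat" where
  "ulam_decision a b N p zs =
     (if dval_tuple (fm_dnf_of_code (ulam_descr a b N p) (nthd 0 zs 0)) (list_decode (nthd 0 zs 1))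
      then 1 else 0)"

lemma computable_ulam_decision: "computable (\<lambda>q. ulam_decision (fst q) (fst (snd q)) (fst (snd (snd q)))
    (fst (snd (snd (snd q)))) (snd (snd (snd (snd q)))))"
  unfolding ulam_decision_def by (intro computable_intros)

definition ulam_density_code :: "nat \<Rightarrow> nat \<Rightarrow> nat \<Rightarrow> nat \<Rightarrow> nat list \<Rightarrow> nat" where
  "ulam_density_code a b N p zs = prod_encode (int_encode (int p), nat (snd (snd (ulam_descr a b N p))))"

lemma computable_ulam_density_code: "computable (\<lambda>q. ulam_density_code (fst q) (fst (snd q))
    (fst (snd (snd q))) (fst (snd (snd (snd q)))) (snd (snd (snd (snd q)))))"
  unfolding ulam_density_code_def by (intro computable_intros)

lemma (in ulam_periodic) ulam_decision_eq:
  "ulam_decision a b N p [fm_code \<phi>, list_encode xs] = (if sat (ulam_set a b) (tuple_env xs) \<phi> then 1 else 0)"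
  "ulam_decision a b N p [fm_code \<phi>] = (if sat (ulam_set a b) (\<lambda>_. 0) \<phi> then 1 else 0)"
proof -
  have "tuple_env [] = (\<lambda>_. 0)" by (auto simp: tuple_env_def)
  then show "ulam_decision a b N p [fm_code \<phi>, list_encode xs] =
    (if sat (ulam_set a b) (tuple_env xs) \<phi> then 1 else 0)"
    "ulam_decision a b N p [fm_code \<phi>] = (if sat (ulam_set a b) (\<lambda>_. 0) \<phi> then 1 else 0)"
    using dval_tuple_ulam_descr[of \<phi> xs] dval_tuple_ulam_descr[of \<phi> "[]"]
    by (simp_all add: ulam_decision_def nthd_eq)
qed

lemma (in ulam_periodic) ulam_density_code_eq:
  "ulam_density_code a b N p [] = prod_encode (int_encode (int p), ulam_period_increase a b N p)"
  by (simp add: ulam_density_code_def ulam_descr_eq)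

theorem mainTheorem19:
  fixes P :: "(nat \<times> nat) set" and wN wp :: recf
  assumes pairs: "\<And>a b. (a, b) \<in> P \<Longrightarrow> 0 < a \<and> a < b \<and> coprime a b"
    and witnesses: "\<And>a b. (a, b) \<in> P \<Longrightarrow>
          \<exists>N p. eval wN [a, b] N \<and> eval wp [a, b] p \<and> periodic_witness a b N p"
  shows
    "(\<exists>D. \<forall>a b. (a, b) \<in> P \<longrightarrow>
        (\<exists>num den. den > 0 \<and> eval D [a, b] (prod_encode (int_encode num, den)) \<and>
           (\<lambda>n. real (card (ulam_set a b \<inter> {0..n})) / real n)
             \<longlonglongrightarrow> real_of_int num / real den))
   \<and> (\<exists>T. \<forall>a b \<phi>. (a, b) \<in> P \<and> fvars \<phi> = {} \<longrightarrow>
        eval T [a, b, fm_code \<phi>] (if sat (ulam_set a b) (\<lambda>_. 0) \<phi> then 1 else 0))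
   \<and> (\<exists>M. \<forall>a b \<phi> xs. (a, b) \<in> P \<and> fvars \<phi> \<subseteq> {..<length xs} \<longrightarrow>
        eval M [a, b, fm_code \<phi>, list_encode xs]
          (if sat (ulam_set a b) (tuple_env xs) \<phi> then 1 else 0))"
proof -
  have periodic: "\<exists>N p. eval wN [a, b] N \<and> eval wp [a, b] p \<and> ulam_periodic a b N p"
    if "(a, b) \<in> P" for a b
    using pairs[OF that] witnesses[OF that] by (auto simp: ulam_periodic_def)
  obtain D where D: "\<And>a b N p zs. length zs = 0 \<Longrightarrow> eval wN [a, b] N \<Longrightarrow> eval wp [a, b] p \<Longrightarrow>
      eval D (a # b # zs) (ulam_density_code a b N p zs)"
    using recursive_with_witnesses[OF computable_ulam_density_code, where k = 0] by blast
  obtain T where T: "\<And>a b N p zs. length zs = 1 \<Longrightarrow> eval wN [a, b] N \<Longrightarrow> eval wp [a, b] p \<Longrightarrow>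
      eval T (a # b # zs) (ulam_decision a b N p zs)"
    using recursive_with_witnesses[OF computable_ulam_decision, where k = 1] by blast
  obtain M where M: "\<And>a b N p zs. length zs = 2 \<Longrightarrow> eval wN [a, b] N \<Longrightarrow> eval wp [a, b] p \<Longrightarrow>
      eval M (a # b # zs) (ulam_decision a b N p zs)"
    using recursive_with_witnesses[OF computable_ulam_decision, where k = 2] by blast
  have parts: "(\<exists>num den. den > 0 \<and> eval D [a, b] (prod_encode (int_encode num, den)) \<and>
        (\<lambda>n. real (card (ulam_set a b \<inter> {0..n})) / real n) \<longlonglongrightarrow> real_of_int num / real den)
      \<and> eval T [a, b, fm_code \<phi>] (if sat (ulam_set a b) (\<lambda>_. 0) \<phi> then 1 else 0)
      \<and> eval M [a, b, fm_code \<phi>, list_encode xs] (if sat (ulam_set a b) (tuple_env xs) \<phi> then 1 else 0)"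
    if ab: "(a, b) \<in> P" for a b \<phi> xs
  proof -
    obtain N p where w: "eval wN [a, b] N" "eval wp [a, b] p" "ulam_periodic a b N p"
      using periodic[OF ab] by blast
    interpret ulam_periodic a b N p by (rule w(3))
    show ?thesis
      using D[where zs = "[]", OF _ w(1,2)] T[where zs = "[fm_code \<phi>]", OF _ w(1,2)]
        M[where zs = "[fm_code \<phi>, list_encode xs]", OF _ w(1,2)] period_increase_pos ulam_density
      by (simp add: ulam_density_code_eq ulam_decision_eq, intro exI[of _ "int p"] exI) simp
  qed
  then show ?thesis by blast
qed

end
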